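(* Let $(p,q)$ be a piecewise elementary pair of partial isomorphisms of $\mathbb{QU}_{\prec}$ and suppose the triple $(p',q',w)$ liberates $p$ in $(p,q)$. Let $u$ be a reduced word that is either empty or of the form $u=t^nv$ ($n\neq0$, product reduced) such that $uw$ is reduced. Then there are partial isomorphisms $p''\supseteq p'$, $q''\supseteq q'$ of $\mathbb{QU}_{\prec}$ such that $(p'',q'',uw)$ liberates $p$ in $(p,q)$. The same holds with $p,q$ and $s,t$ interchanged (liberating $q$, with $u$ empty or $u=s^mv$, $m\ne0$).
   Context: $\mathbb{QU}_{\prec}$ is the Fraïssé limit of the class of finite ordered metric spaces (metric spaces with an arbitrary linear order) with rational distances; denote its linear order by $<$. A partial isomorphism of $\mathbb{QU}_{\prec}$ is an isometric order-preserving bijection $p$ between finite subsets $\mathrm{dom}(p),\mathrm{ran}(p)$; $p'\supseteq p$ means $p'$ extends $p$; intervals are taken with respect to $<$; $p|_I$ is the restriction of $p$ to $I\cap\mathrm{dom}(p)$; $\mathrm{Fix}(p)=\{c\in\mathrm{dom}(p):p(c)=c\}$. An open interval $(a,b)$ is $p$-increasing if $a,b\in\mathrm{dom}(p)$, $p(a)=a$, $p(b)=b$ and $p(c)>c$ for all $c\in\mathrm{dom}(p)\cap(a,b)$; $p$-decreasing likewise with $p(c)<c$; $p$-monotone means either. Writing $\mathrm{dom}(p)=\{a_0<\dots<a_n\}$, $p$ is informative if $p(a_0)=a_0$, $p(a_n)=a_n$ and there are indices $0=i_0<\dots<i_r=n$ with $p(a_{i_k})=a_{i_k}$ and each $(a_{i_k},a_{i_{k+1}})$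 $p$-monotone; then $\mathrm{Ess}(p)=(\mathrm{dom}(p)\cup\mathrm{ran}(p))\setminus\{a_0,a_n\}$. A pair $(p,q)$ is piecewise elementary if $p,q$ are informative, $\min\mathrm{dom}(p)=\min\mathrm{dom}(q)$ and $\max\mathrm{dom}(p)=\max\mathrm{dom}(q)$; it is elementary if moreover $\mathrm{Fix}(p)\cap\mathrm{Fix}(q)$ consists only of this min and max. Words: $F(s,t)$ free group; for reduced $w=t^{n_k}s^{m_k}\cdots t^{n_1}s^{m_1}$, $w(p,q)(c)=q^{n_k}p^{m_k}\cdots q^{n_1}p^{m_1}(c)$ when defined (rightmost letter acts first); "$w=t^nv$" means the product is reduced. Liberation for elementary pairs: a triple $(p',q',w)$ with $p'\supseteq p$, $q'\supseteq q$ partial isomorphisms and $w$ reduced liberates $p$ in $(p,q)$ if: (i) $p',q'$ are informative; (ii) $\min\mathrm{dom}(p')=\min\mathrm{dom}(p)$, $\min\mathrm{dom}(q')=\min\mathrm{dom}(q)$, $\max\mathrm{dom}(p')=\max\mathrm{dom}(p)$, $\max\mathrm{dom}(q')=\max\mathrm{dom}(q)$; (iii) $w=t^nv$ with $n\neq0$; (iv) $w(p',q')(c)$ is defined for all $c\in\mathrm{Ess}(p)\cup\mathrm{Ess}(q)$ and $w(p',q')(\min(\mathrm{Ess}(p)\cup\mathrm{Ess}(q)))>\max\mathrm{Ess}(p')$; (v) there is an open interval $J$ whose right endpoint is $\max\mathrm{dom}(q)$, with $w(p',q')(c)\in J$ for all $c\in\mathrm{Ess}(p)\cup\mathrm{Ess}(q)$,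 and $J$ is $q'$-increasing if $n>0$ and $q'$-decreasing if $n<0$. It liberates $q$ if the same holds with roles of $p,q$ and of $s,t$ interchanged. Liberation for piecewise elementary pairs: let $a_0<\dots<a_m$ enumerate $\mathrm{Fix}(p)\cap\mathrm{Fix}(q)$ and $I_j=[a_j,a_{j+1}]$; $(p',q',w)$ liberates $p$ [resp. $q$] in $(p,q)$ if the min/max conditions (ii) hold and for every $j<m$ the triple $(p'|_{I_j},q'|_{I_j},w)$ liberates $p|_{I_j}$ [resp. $q|_{I_j}$] in $(p|_{I_j},q|_{I_j})$. *)

theory Defs
  imports Main "HOL-Library.Countable_Set"
begin

text \<open>We work on a type 'a whose linear order is the order of the structure, with a
rational-valued distance d. QU_prec d says that (UNIV, <, d) is (up to isomorphism)
the Fraisse limit of finite ordered rational metric spaces: it is a countable ordered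
rational metric space with the one-point extension property.\<close>

definition rat_metric :: "('a \<Rightarrow> 'a \<Rightarrow> rat) \<Rightarrow> bool" where
  "rat_metric d \<longleftrightarrow>
     (\<forall>x y. d x y \<ge> 0) \<and> (\<forall>x y. d x y = 0 \<longleftrightarrow> x = y) \<and>
     (\<forall>x y. d x y = d y x) \<and> (\<forall>x y z. d x z \<le> d x y + d y z)"

definition extension_property :: "('a::linorder \<Rightarrow> 'a \<Rightarrow> rat) \<Rightarrow> bool" where
  "extension_property d \<longleftrightarrow>
     (\<forall>(A::'a set) (r::'a \<Rightarrow> rat) L.
        finite A \<and> L \<subseteq> A \<and> (\<forall>a\<in>L. \<forall>b\<in>A. b < a \<longrightarrow> b \<in> L) \<and>
        (\<forall>a\<in>A. r a > 0) \<and>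
        (\<forall>a\<in>A. \<forall>b\<in>A. d a b \<le> r a + r b \<and> r a \<le> d a b + r b)
        \<longrightarrow> (\<exists>x. x \<notin> A \<and> (\<forall>a\<in>A. d x a = r a \<and> (a < x \<longleftrightarrow> a \<in> L))))"

definition QU_prec :: "('a::linorder \<Rightarrow> 'a \<Rightarrow> rat) \<Rightarrow> bool" where
  "QU_prec d \<longleftrightarrow> countable (UNIV :: 'a set) \<and> rat_metric d \<and> extension_property d"

definition partial_iso :: "('a::linorder \<Rightarrow> 'a \<Rightarrow> rat) \<Rightarrow> ('a \<rightharpoonup> 'a) \<Rightarrow> bool" where
  "partial_iso d p \<longleftrightarrow> finite (dom p) \<and>
     (\<forall>x\<in>dom p. \<forall>y\<in>dom p. d (the (p x)) (the (p y)) = d x y \<and>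
                             (x < y \<longrightarrow> the (p x) < the (p y)))"

definition Fix :: "('a \<rightharpoonup> 'a) \<Rightarrow> 'a set" where
  "Fix p = {c \<in> dom p. p c = Some c}"

definition p_increasing :: "('a::linorder \<rightharpoonup> 'a) \<Rightarrow> 'a \<Rightarrow> 'a \<Rightarrow> bool" where
  "p_increasing p a b \<longleftrightarrow> a < b \<and> a \<in> dom p \<and> b \<in> dom p \<and> p a = Some a \<and> p b = Some b \<and>
     (\<forall>c \<in> dom p \<inter> {a<..<b}. c < the (p c))"

definition p_decreasing :: "('a::linorder \<rightharpoonup> 'a) \<Rightarrow> 'a \<Rightarrow> 'a \<Rightarrow> bool" where
  "p_decreasing p a b \<longleftrightarrow> a < b \<and> a \<in> dom p \<and> b \<in> dom p \<and> p a = Some a \<and> p b = Some b \<and>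
     (\<forall>c \<in> dom p \<inter> {a<..<b}. the (p c) < c)"

definition p_monotone :: "('a::linorder \<rightharpoonup> 'a) \<Rightarrow> 'a \<Rightarrow> 'a \<Rightarrow> bool" where
  "p_monotone p a b \<longleftrightarrow> p_increasing p a b \<or> p_decreasing p a b"

definition informative :: "('a::linorder \<rightharpoonup> 'a) \<Rightarrow> bool" where
  "informative p \<longleftrightarrow> finite (dom p) \<and> dom p \<noteq> {} \<and>
     p (Min (dom p)) = Some (Min (dom p)) \<and> p (Max (dom p)) = Some (Max (dom p)) \<and>
     (\<exists>F \<subseteq> Fix p. Min (dom p) \<in> F \<and> Max (dom p) \<in> F \<and>
        (\<forall>a\<in>F. \<forall>b\<in>F. a < b \<and> (\<forall>c\<in>F. \<not> (a < c \<and> c < b)) \<longrightarrow> p_monotone p a b))"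

definition Ess :: "('a::linorder \<rightharpoonup> 'a) \<Rightarrow> 'a set" where
  "Ess p = (dom p \<union> ran p) - {Min (dom p), Max (dom p)}"

definition pw_elementary :: "('a::linorder \<Rightarrow> 'a \<Rightarrow> rat) \<Rightarrow> ('a \<rightharpoonup> 'a) \<Rightarrow> ('a \<rightharpoonup> 'a) \<Rightarrow> bool" where
  "pw_elementary d p q \<longleftrightarrow> partial_iso d p \<and> partial_iso d q \<and> informative p \<and> informative q \<and>
     Min (dom p) = Min (dom q) \<and> Max (dom p) = Max (dom q)"

definition elementary :: "('a::linorder \<Rightarrow> 'a \<Rightarrow> rat) \<Rightarrow> ('a \<rightharpoonup> 'a) \<Rightarrow> ('a \<rightharpoonup> 'a) \<Rightarrow> bool" where
  "elementary d p q \<longleftrightarrow> pw_elementary d p q \<and> Fix p \<inter> Fix q = {Min (dom p), Max (dom p)}"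

text \<open>Words are lists of generators s, s^-1, t, t^-1; the head of the list is the
leftmost letter. The product of words is list append.\<close>
datatype gen = Gs | Gs_inv | Gt | Gt_inv

fun inv_gen :: "gen \<Rightarrow> gen" where
  "inv_gen Gs = Gs_inv" | "inv_gen Gs_inv = Gs" | "inv_gen Gt = Gt_inv" | "inv_gen Gt_inv = Gt"

fun swap_gen :: "gen \<Rightarrow> gen" where
  "swap_gen Gs = Gt" | "swap_gen Gs_inv = Gt_inv" | "swap_gen Gt = Gs" | "swap_gen Gt_inv = Gs_inv"

definition reduced :: "gen list \<Rightarrow> bool" where
  "reduced w \<longleftrightarrow> (\<forall>i. Suc i < length w \<longrightarrow> w ! Suc i \<noteq> inv_gen (w ! i))"

text \<open>w = t^n v (reduced, n /= 0): the leftmost letter is t or t^-1; n > 0 iff it is t.\<close>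
definition starts_with_t :: "gen list \<Rightarrow> bool" where
  "starts_with_t w \<longleftrightarrow> w \<noteq> [] \<and> (hd w = Gt \<or> hd w = Gt_inv)"

definition starts_with_s :: "gen list \<Rightarrow> bool" where
  "starts_with_s w \<longleftrightarrow> w \<noteq> [] \<and> (hd w = Gs \<or> hd w = Gs_inv)"

definition pinv :: "('a \<rightharpoonup> 'a) \<Rightarrow> ('a \<rightharpoonup> 'a)" where
  "pinv p = (\<lambda>y. if y \<in> ran p then Some (THE x. p x = Some y) else None)"

fun act :: "('a \<rightharpoonup> 'a) \<Rightarrow> ('a \<rightharpoonup> 'a) \<Rightarrow> gen \<Rightarrow> ('a \<rightharpoonup> 'a)" where
  "act p q Gs = p" | "act p q Gs_inv = pinv p" | "act p q Gt = q" | "act p q Gt_inv = pinv q"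

text \<open>w(p,q)(c): rightmost letter acts first; None = undefined.\<close>
fun eval_word :: "gen list \<Rightarrow> ('a \<rightharpoonup> 'a) \<Rightarrow> ('a \<rightharpoonup> 'a) \<Rightarrow> 'a \<Rightarrow> 'a option" where
  "eval_word [] p q c = Some c"
| "eval_word (g # w) p q c =
     (case eval_word w p q c of None \<Rightarrow> None | Some x \<Rightarrow> act p q g x)"

definition liberates_elem ::
  "('a::linorder \<Rightarrow> 'a \<Rightarrow> rat) \<Rightarrow> ('a \<rightharpoonup> 'a) \<Rightarrow> ('a \<rightharpoonup> 'a) \<Rightarrow> ('a \<rightharpoonup> 'a) \<Rightarrow> ('a \<rightharpoonup> 'a)
     \<Rightarrow> gen list \<Rightarrow> bool" where
  "liberates_elem d p q p' q' w \<longleftrightarrow>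
     partial_iso d p' \<and> partial_iso d q' \<and> p \<subseteq>\<^sub>m p' \<and> q \<subseteq>\<^sub>m q' \<and> reduced w \<and>
     \<comment> \<open>(i)\<close>
     informative p' \<and> informative q' \<and>
     \<comment> \<open>(ii)\<close>
     Min (dom p') = Min (dom p) \<and> Min (dom q') = Min (dom q) \<and>
     Max (dom p') = Max (dom p) \<and> Max (dom q') = Max (dom q) \<and>
     \<comment> \<open>(iii)\<close>
     starts_with_t w \<and>
     \<comment> \<open>(iv)\<close>
     (\<forall>c \<in> Ess p \<union> Ess q. eval_word w p' q' c \<noteq> None) \<and>
     (Ess p \<union> Ess q \<noteq> {} \<longrightarrow>
        (\<forall>x \<in> Ess p'. x < the (eval_word w p' q' (Min (Ess p \<union> Ess q))))) \<and>
     \<comment> \<open>(v)\<close>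
     (\<exists>a. (\<forall>c \<in> Ess p \<union> Ess q.
             a < the (eval_word w p' q' c) \<and> the (eval_word w p' q' c) < Max (dom q)) \<and>
          (if hd w = Gt then p_increasing q' a (Max (dom q))
           else p_decreasing q' a (Max (dom q))))"

definition liberates_p ::
  "('a::linorder \<Rightarrow> 'a \<Rightarrow> rat) \<Rightarrow> ('a \<rightharpoonup> 'a) \<Rightarrow> ('a \<rightharpoonup> 'a) \<Rightarrow> ('a \<rightharpoonup> 'a) \<Rightarrow> ('a \<rightharpoonup> 'a)
     \<Rightarrow> gen list \<Rightarrow> bool" where
  "liberates_p d p q p' q' w \<longleftrightarrow>
     partial_iso d p' \<and> partial_iso d q' \<and> p \<subseteq>\<^sub>m p' \<and> q \<subseteq>\<^sub>m q' \<and> reduced w \<and>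
     Min (dom p') = Min (dom p) \<and> Min (dom q') = Min (dom q) \<and>
     Max (dom p') = Max (dom p) \<and> Max (dom q') = Max (dom q) \<and>
     (\<forall>a b. a \<in> Fix p \<inter> Fix q \<and> b \<in> Fix p \<inter> Fix q \<and> a < b \<and>
            (\<forall>c \<in> Fix p \<inter> Fix q. \<not> (a < c \<and> c < b)) \<longrightarrow>
        liberates_elem d (p |` {a..b}) (q |` {a..b}) (p' |` {a..b}) (q' |` {a..b}) w)"

definition liberates_q ::
  "('a::linorder \<Rightarrow> 'a \<Rightarrow> rat) \<Rightarrow> ('a \<rightharpoonup> 'a) \<Rightarrow> ('a \<rightharpoonup> 'a) \<Rightarrow> ('a \<rightharpoonup> 'a) \<Rightarrow> ('a \<rightharpoonup> 'a)
     \<Rightarrow> gen list \<Rightarrow> bool" where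
  "liberates_q d p q p' q' w \<longleftrightarrow> liberates_p d q p q' p' (map swap_gen w)"

end

theory Submission
  imports Defs
begin

(* Liberation of p in a piecewise elementary pair (p,q) is a conjunction of
   conditions, one for each interval [a,b] between consecutive common fixed points
   of p and q, and extensions made inside the open intervals (a,b) do not interfere
   with each other.  On one interval we maintain an invariant (push_inv) for the
   current word W: the images under W of the essential points exist, lie in a final
   monotone interval (alpha,b) of the map read by the leftmost letter of W, and lie
   above every inner point of the other map; both maps stay informative.  A new leftmost
   letter g, with gW reduced, is absorbed by extending the maps inside (a,b):
     - if g is a power of the same generator, the images are pushed once more
       through the monotone interval (alpha,b);
     - otherwise g reads the other map; a fresh fixed point f of it is created
       above all its inner points and below the images; (f,b) is then an empty,
       hence monotone, interval of that map, and the images are pushed through it.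
   New points are produced by the one-point extension property of QU_prec, and
   inverse letters are handled by passing to inverse maps.  Prepending the letters
   of u one at a time yields the invariant for uw, which gives liberation.  The
   statement for q follows from the one for p by the s/t symmetry. *)

section \<open>Partial isomorphisms and one-point extensions\<close>

lemma metric_facts:
  assumes "rat_metric d"
  shows "d x y \<ge> 0" "d x x = 0" "d x y = d y x" "d x z \<le> d x y + d y z"
    "d x y = 0 \<longleftrightarrow> x = y"
  using assms unfolding rat_metric_def by auto

lemma piso_fin: "partial_iso d R \<Longrightarrow> finite (dom R)"
  unfolding partial_iso_def by auto

lemma piso_D:
  assumes "partial_iso d R" "R z = Some w" "R z' = Some w'"
  shows "d w w' = d z z'" "z < z' \<Longrightarrow> w < w'"
proof -
  have "z \<in> dom R" "z' \<in> dom R" using assms by auto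
  then have "d (the (R z)) (the (R z')) = d z z' \<and> (z < z' \<longrightarrow> the (R z) < the (R z'))"
    using assms(1) unfolding partial_iso_def by blast
  then show "d w w' = d z z'" "z < z' \<Longrightarrow> w < w'" using assms by auto
qed

lemma piso_mono_iff:
  fixes R :: "'a::linorder \<rightharpoonup> 'a"
  assumes "partial_iso d R" "R z = Some w" "R z' = Some w'"
  shows "z < z' \<longleftrightarrow> w < w'" "z \<le> z' \<longleftrightarrow> w \<le> w'" "z = z' \<longleftrightarrow> w = w'"
proof -
  have a: "z < z' \<Longrightarrow> w < w'" "z' < z \<Longrightarrow> w' < w" using piso_D(2) assms by metis+
  show "z < z' \<longleftrightarrow> w < w'" "z \<le> z' \<longleftrightarrow> w \<le> w'" "z = z' \<longleftrightarrow> w = w'"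
    using a assms by (cases z z' rule: linorder_cases; auto)+
qed

lemma fixed_ends_between:
  fixes R :: "'a::linorder \<rightharpoonup> 'a"
  assumes "partial_iso d R" "R a = Some a" "R b = Some b" "R x = Some y"
  shows "a \<le> x \<longleftrightarrow> a \<le> y" "x \<le> b \<longleftrightarrow> y \<le> b" "a < x \<longleftrightarrow> a < y" "x < b \<longleftrightarrow> y < b"
  using piso_mono_iff[OF assms(1,2,4)] piso_mono_iff[OF assms(1,4,3)] by auto

lemma pinv_iff:
  fixes R :: "'a::linorder \<rightharpoonup> 'a"
  assumes "partial_iso d R"
  shows "pinv R y = Some x \<longleftrightarrow> R x = Some y"
proof
  assume h: "pinv R y = Some x"
  then have "y \<in> ran R" unfolding pinv_def by (auto split: if_splits)
  then obtain x0 where x0: "R x0 = Some y" unfolding ran_def by auto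
  have "(THE x. R x = Some y) = x0"
    using x0 piso_mono_iff(3)[OF assms x0] by (intro the_equality) auto
  then show "R x = Some y" using h x0 \<open>y \<in> ran R\<close> unfolding pinv_def by auto
next
  assume h: "R x = Some y"
  then have "y \<in> ran R" by (auto simp: ran_def)
  have "(THE x'. R x' = Some y) = x"
    using h piso_mono_iff(3)[OF assms h] by (intro the_equality) auto
  then show "pinv R y = Some x" using \<open>y \<in> ran R\<close> unfolding pinv_def by auto
qed

lemma piso_pinv:
  fixes R :: "'a::linorder \<rightharpoonup> 'a"
  assumes pi: "partial_iso d R"
  shows "partial_iso d (pinv R)"
proof -
  have "dom (pinv R) = ran R" unfolding pinv_def by (auto simp: dom_def)
  moreover have "d (the (pinv R x)) (the (pinv R y)) = d x y \<and> (x < y \<longrightarrow> the (pinv R x) < the (pinv R y))"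
    if xy: "x \<in> dom (pinv R)" "y \<in> dom (pinv R)" for x y
  proof -
    obtain x' y' where x': "pinv R x = Some x'" and y': "pinv R y = Some y'" using xy by blast
    then have "R x' = Some x" "R y' = Some y" using pinv_iff[OF pi] by auto
    then show ?thesis using x' y' piso_D(1)[OF pi] piso_mono_iff(1)[OF pi] by (metis option.sel)
  qed
  ultimately show ?thesis unfolding partial_iso_def using piso_fin[OF pi] finite_ran by auto
qed

lemma map_le_apply: "P \<subseteq>\<^sub>m P' \<Longrightarrow> P x = Some z \<Longrightarrow> P' x = Some z"
  by (auto simp: map_le_def dom_def)

lemma pinv_mono_map:
  assumes "partial_iso d P" "partial_iso d P'" "P \<subseteq>\<^sub>m P'" "pinv P x = Some z"
  shows "pinv P' x = Some z"
  using assms map_le_apply pinv_iff by metis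

lemma piso_restrict:
  assumes "partial_iso d m" shows "partial_iso d (m |` S)"
proof -
  have "dom (m |` S) = dom m \<inter> S" by simp
  moreover have "finite (dom m \<inter> S)" using assms unfolding partial_iso_def by auto
  ultimately show ?thesis using assms unfolding partial_iso_def by (auto simp: restrict_map_def)
qed

lemma restrict_map_le: "p \<subseteq>\<^sub>m P \<Longrightarrow> p |` S \<subseteq>\<^sub>m P |` S"
  by (auto simp: map_le_def restrict_map_def)

lemma piso_upd:
  fixes R :: "'a::linorder \<rightharpoonup> 'a"
  assumes rm: "rat_metric d" and pi: "partial_iso d R" and nx: "x \<notin> dom R"
    and c: "\<forall>z w. R z = Some w \<longrightarrow> d y w = d x z \<and> (z < x \<longrightarrow> w < y) \<and> (x < z \<longrightarrow> y < w)"
  shows "partial_iso d (R(x \<mapsto> y))"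
proof -
  have "d (the ((R(x \<mapsto> y)) a)) (the ((R(x \<mapsto> y)) b)) = d a b \<and>
         (a < b \<longrightarrow> the ((R(x \<mapsto> y)) a) < the ((R(x \<mapsto> y)) b))"
    if a: "a \<in> dom (R(x \<mapsto> y))" and b: "b \<in> dom (R(x \<mapsto> y))" for a b
  proof (cases "a = x"; cases "b = x")
    assume "a = x" "b = x" then show ?thesis using metric_facts(2)[OF rm] by simp
  next
    assume "a = x" "b \<noteq> x"
    then obtain w where "R b = Some w" using b by auto
    then show ?thesis using c \<open>a = x\<close> \<open>b \<noteq> x\<close> by auto
  next
    assume "a \<noteq> x" "b = x"
    then obtain w where "R a = Some w" using a by auto
    then show ?thesis using c \<open>a \<noteq> x\<close> \<open>b = x\<close> metric_facts(3)[OF rm] by auto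
  next
    assume "a \<noteq> x" "b \<noteq> x"
    then obtain wa wb where "R a = Some wa" "R b = Some wb" using a b by auto
    then show ?thesis using \<open>a \<noteq> x\<close> \<open>b \<noteq> x\<close> piso_D[OF pi] by auto
  qed
  then show ?thesis unfolding partial_iso_def using piso_fin[OF pi] by auto
qed

text \<open>The one-point extension property in the form used below: distances need only
  be prescribed on a nonempty subset B of A (they are extended to A by the usual
  Katetov formula), and the new point is placed just above the down-closure of Low.\<close>

lemma one_point_extension:
  fixes d :: "'a::linorder \<Rightarrow> 'a \<Rightarrow> rat"
  assumes QU: "QU_prec d" and fA: "finite A" and BA: "B \<subseteq> A" and Bne: "B \<noteq> {}"
    and fpos: "\<forall>b\<in>B. f b > 0"
    and kat: "\<forall>b\<in>B. \<forall>b'\<in>B. d b b' \<le> f b + f b' \<and> f b \<le> d b b' + f b'"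
  shows "\<exists>y. y \<notin> A \<and> (\<forall>b\<in>B. d y b = f b) \<and> (\<forall>v\<in>A. v < y \<longleftrightarrow> (\<exists>t\<in>Low. v \<le> t))"
proof -
  have rm: "rat_metric d" and ext: "extension_property d" using QU unfolding QU_prec_def by auto
  have fB: "finite B" using fA BA finite_subset by blast
  define r where "r v = Min ((\<lambda>b. d v b + f b) ` B)" for v
  have rle: "r v \<le> d v b + f b" if "b \<in> B" for v b
    unfolding r_def using fB that by (intro Min_le) auto
  have rex: "\<exists>b\<in>B. r v = d v b + f b" for v
  proof -
    have "r v \<in> (\<lambda>b. d v b + f b) ` B" unfolding r_def using fB Bne by (intro Min_in) auto
    then show ?thesis by auto
  qed
  have rpos: "r v > 0" for v
  proof -
    obtain b where "b\<in>B" "r v = d v b + f b" using rex by blast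
    then show ?thesis using fpos metric_facts(1)[OF rm, of v b] by (simp add: add_nonneg_pos)
  qed
  have rB: "r b = f b" if "b \<in> B" for b
  proof -
    have "r b \<le> f b" using rle[OF that, of b] metric_facts(2)[OF rm] by simp
    moreover obtain b' where "b' \<in> B" "r b = d b b' + f b'" using rex by blast
    moreover have "f b \<le> d b b' + f b'" using kat that \<open>b' \<in> B\<close> by blast
    ultimately show ?thesis by simp
  qed
  have k1: "d v w \<le> r v + r w" for v w
  proof -
    obtain bv where bv: "bv \<in> B" "r v = d v bv + f bv" using rex by blast
    obtain bw where bw: "bw \<in> B" "r w = d w bw + f bw" using rex by blast
    have "d v w \<le> d v bv + d bv w" using metric_facts(4)[OF rm] .
    also have "d bv w \<le> d bv bw + d bw w" using metric_facts(4)[OF rm] .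
    also have "d bv bw \<le> f bv + f bw" using kat bv bw by blast
    finally show ?thesis using bv bw metric_facts(3)[OF rm, of bw w] by simp
  qed
  have k2: "r v \<le> d v w + r w" for v w
  proof -
    obtain bw where bw: "bw \<in> B" "r w = d w bw + f bw" using rex by blast
    have "r v \<le> d v bw + f bw" using rle bw by blast
    also have "d v bw \<le> d v w + d w bw" using metric_facts(4)[OF rm] .
    finally show ?thesis using bw by simp
  qed
  define L where "L = {v\<in>A. \<exists>t\<in>Low. v \<le> t}"
  have "finite A \<and> L \<subseteq> A \<and> (\<forall>a\<in>L. \<forall>b\<in>A. b < a \<longrightarrow> b \<in> L) \<and>
      (\<forall>a\<in>A. r a > 0) \<and> (\<forall>a\<in>A. \<forall>b\<in>A. d a b \<le> r a + r b \<and> r a \<le> d a b + r b)"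
    using fA k1 k2 rpos unfolding L_def by (auto, metis less_imp_le order.trans)
  then have "\<exists>x. x \<notin> A \<and> (\<forall>a\<in>A. d x a = r a \<and> (a < x \<longleftrightarrow> a \<in> L))"
    using ext unfolding extension_property_def by blast
  then obtain x where x: "x \<notin> A" "\<forall>a\<in>A. d x a = r a \<and> (a < x \<longleftrightarrow> a \<in> L)" by blast
  show ?thesis
    by (rule exI[of _ x]) (use x BA rB in \<open>auto simp: L_def\<close>)
qed

lemma extend_forward:
  fixes d :: "'a::linorder \<Rightarrow> 'a \<Rightarrow> rat"
  assumes QU: "QU_prec d" and pi: "partial_iso d R" and nx: "x \<notin> dom R"
    and rne: "ran R \<noteq> {}" and fL: "finite Low"
    and c: "\<forall>z w. R z = Some w \<and> x < z \<longrightarrow> (\<forall>t\<in>Low. t < w)"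
  shows "\<exists>y. partial_iso d (R(x \<mapsto> y)) \<and> (\<forall>t\<in>Low. t < y)"
proof -
  have rm: "rat_metric d" using QU unfolding QU_prec_def by auto
  define Low' where "Low' = Low \<union> {w. \<exists>z. R z = Some w \<and> z < x}"
  define A where "A = ran R \<union> Low'"
  define f where "f b = d x (the (pinv R b))" for b
  have fr: "finite (ran R)" using piso_fin[OF pi] finite_ran by blast
  have fLow': "finite Low'" unfolding Low'_def
    using fL by (rule finite_UnI) (rule finite_subset[OF _ fr], auto simp: ran_def)
  have fA: "finite A" unfolding A_def using fr fLow' by auto
  have fv: "f w = d x z" if "R z = Some w" for z w
  proof -
    have "pinv R w = Some z" using pinv_iff[OF pi] that by simp
    then show ?thesis unfolding f_def by simp
  qed
  have "\<exists>y. y \<notin> A \<and> (\<forall>b\<in>ran R. d y b = f b) \<and> (\<forall>v\<in>A. v < y \<longleftrightarrow> (\<exists>t\<in>Low'. v \<le> t))"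
  proof (rule one_point_extension[OF QU fA _ rne])
    show "ran R \<subseteq> A" unfolding A_def by auto
    show "\<forall>b\<in>ran R. 0 < f b"
    proof
      fix b assume "b \<in> ran R"
      then obtain z where z: "R z = Some b" by (auto simp: ran_def)
      then have "z \<noteq> x" using nx by auto
      then show "0 < f b" using fv[OF z] metric_facts(1,5)[OF rm, of x z] by auto
    qed
    show "\<forall>b\<in>ran R. \<forall>b'\<in>ran R. d b b' \<le> f b + f b' \<and> f b \<le> d b b' + f b'"
    proof (intro ballI)
      fix b b' assume "b \<in> ran R" "b' \<in> ran R"
      then obtain z z' where z: "R z = Some b" and z': "R z' = Some b'" by (auto simp: ran_def)
      show "d b b' \<le> f b + f b' \<and> f b \<le> d b b' + f b'"
      proof -
        have "d z z' \<le> d z x + d x z'" "d x z \<le> d x z' + d z' z" "d z x = d x z" "d z' z = d z z'"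
          using metric_facts(3,4)[OF rm] by blast+
        then show ?thesis using piso_D(1)[OF pi z z'] fv[OF z] fv[OF z'] by simp
      qed
    qed
  qed
  then obtain y where y: "y \<notin> A" "\<forall>b\<in>ran R. d y b = f b" "\<forall>v\<in>A. v < y \<longleftrightarrow> (\<exists>t\<in>Low'. v \<le> t)"
    by blast
  have upd: "partial_iso d (R(x \<mapsto> y))"
  proof (rule piso_upd[OF rm pi nx], intro allI impI conjI)
    fix z w assume z: "R z = Some w"
    have wA: "w \<in> A" using z unfolding A_def by (auto simp: ran_def)
    show "d y w = d x z" using y(2) z fv[OF z] by (auto simp: ran_def)
    show "z < x \<Longrightarrow> w < y" using y(3) wA z unfolding Low'_def by auto
    show "y < w" if "x < z"
    proof -
      have "\<not> w < y"
      proof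
        assume "w < y"
        then obtain t where t: "t \<in> Low'" "w \<le> t" using y(3) wA by blast
        show False
        proof (cases "t \<in> Low")
          case True
          have "t < w" using c z that True by blast
          then show False using t(2) by auto
        next
          case False
          then obtain z2 where z2: "R z2 = Some t" "z2 < x" using t(1) unfolding Low'_def by auto
          have "t < w" using piso_D(2)[OF pi z2(1) z] z2(2) that by auto
          then show False using t(2) by auto
        qed
      qed
      moreover have "w \<noteq> y" using y(1) wA by auto
      ultimately show ?thesis by auto
    qed
  qed
  have "\<forall>t\<in>Low. t < y" using y(3) unfolding A_def Low'_def by auto
  then show ?thesis using upd by blast
qed

lemma new_fixed_point:
  fixes d :: "'a::linorder \<Rightarrow> 'a \<Rightarrow> rat"
  assumes QU: "QU_prec d" and pi: "partial_iso d N" and fA: "finite A"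
    and dA: "dom N \<subseteq> A" and rA: "ran N \<subseteq> A" and Ane: "A \<noteq> {}"
    and c: "\<forall>z w. N z = Some w \<longrightarrow> ((\<exists>t\<in>Low. z \<le> t) \<longleftrightarrow> (\<exists>t\<in>Low. w \<le> t))"
  shows "\<exists>f. f \<notin> A \<and> partial_iso d (N(f \<mapsto> f)) \<and> (\<forall>v\<in>A. v < f \<longleftrightarrow> (\<exists>t\<in>Low. v \<le> t))"
proof -
  have rm: "rat_metric d" using QU unfolding QU_prec_def by auto
  define K where "K = 1 + Max ((\<lambda>(a,b). d a b) ` (A \<times> A))"
  have dK: "d a b < K" if "a \<in> A" "b \<in> A" for a b
  proof -
    have "d a b \<le> Max ((\<lambda>(a,b). d a b) ` (A \<times> A))"
      using fA that by (intro Max_ge) auto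
    then show ?thesis unfolding K_def by simp
  qed
  have Kpos: "K > 0"
  proof -
    obtain a where "a \<in> A" using Ane by auto
    then show ?thesis using dK[of a a] metric_facts(1)[OF rm, of a a] by auto
  qed
  have "\<exists>y. y \<notin> A \<and> (\<forall>b\<in>A. d y b = (\<lambda>_. K) b) \<and> (\<forall>v\<in>A. v < y \<longleftrightarrow> (\<exists>t\<in>Low. v \<le> t))"
  proof (rule one_point_extension[OF QU fA _ Ane])
    show "A \<subseteq> A" by simp
    show "\<forall>b\<in>A. 0 < K" using Kpos by simp
    show "\<forall>b\<in>A. \<forall>b'\<in>A. d b b' \<le> K + K \<and> K \<le> d b b' + K"
    proof (intro ballI conjI)
      fix b b' assume "b \<in> A" "b' \<in> A"
      then have "d b b' < K" "0 \<le> d b b'" using dK metric_facts(1)[OF rm] by auto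
      then show "d b b' \<le> K + K" "K \<le> d b b' + K" using Kpos by auto
    qed
  qed
  then obtain y where y: "y \<notin> A" "\<forall>b\<in>A. d y b = K" "\<forall>v\<in>A. v < y \<longleftrightarrow> (\<exists>t\<in>Low. v \<le> t)"
    by blast
  have ny: "y \<notin> dom N" using y(1) dA by auto
  have upd: "partial_iso d (N(y \<mapsto> y))"
  proof (rule piso_upd[OF rm pi ny], intro allI impI conjI)
    fix z w assume z: "N z = Some w"
    have zA: "z \<in> A" and wA: "w \<in> A" using z dA rA by (auto simp: ran_def)
    show "d y w = d y z" using y(2) zA wA by simp
    show "w < y" if "z < y" using that y(3) zA wA c z by auto
    show "y < w" if "y < z"
    proof -
      have "\<not> z < y" using that by auto
      then have "\<not> w < y" using y(3) zA wA c z by auto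
      moreover have "w \<noteq> y" using y(1) wA by auto
      ultimately show ?thesis by auto
    qed
  qed
  then show ?thesis using y by blast
qed

section \<open>Words and their evaluation\<close>

lemma eval_mono_map:
  assumes "partial_iso d P" "partial_iso d P'" "partial_iso d Q" "partial_iso d Q'"
    "P \<subseteq>\<^sub>m P'" "Q \<subseteq>\<^sub>m Q'"
  shows "eval_word W P Q c = Some y \<Longrightarrow> eval_word W P' Q' c = Some y"
proof (induction W arbitrary: y)
  case Nil then show ?case by simp
next
  case (Cons g W)
  then obtain x where x: "eval_word W P Q c = Some x" "act P Q g x = Some y"
    by (auto split: option.splits)
  have "eval_word W P' Q' c = Some x" using Cons.IH x(1) .
  moreover have "act P' Q' g x = Some y"
    using x(2) assms pinv_mono_map map_le_apply by (cases g) auto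
  ultimately show ?case by simp
qed

lemma act_order:
  assumes "partial_iso d P" "partial_iso d Q" "act P Q g x = Some y" "act P Q g x' = Some y'" "x < x'"
  shows "y < y'"
proof (cases g)
  case Gs then show ?thesis using assms piso_D(2)[OF assms(1)] by auto
next
  case Gt then show ?thesis using assms piso_D(2)[OF assms(2)] by auto
next
  case Gs_inv then show ?thesis using assms piso_D(2)[OF piso_pinv[OF assms(1)]] by auto
next
  case Gt_inv then show ?thesis using assms piso_D(2)[OF piso_pinv[OF assms(2)]] by auto
qed

lemma eval_order_le:
  assumes "partial_iso d P" "partial_iso d Q"
    "eval_word W P Q c = Some y" "eval_word W P Q c' = Some y'" "c \<le> c'"
  shows "y \<le> y'"
  using assms(3-5)
proof (induction W arbitrary: y y')
  case Nil then show ?case by simp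
next
  case (Cons g W)
  obtain x x' where x: "eval_word W P Q c = Some x" "act P Q g x = Some y"
    and x': "eval_word W P Q c' = Some x'" "act P Q g x' = Some y'"
    using Cons.prems(1,2) by (auto split: option.splits)
  have "x \<le> x'" using Cons.IH x(1) x'(1) Cons.prems(3) by blast
  then show ?case
  proof (cases "x = x'")
    case True then show ?thesis using x(2) x'(2) by simp
  next
    case False
    then have "x < x'" using \<open>x \<le> x'\<close> by simp
    then show ?thesis using act_order[OF assms(1,2) x(2) x'(2)] by simp
  qed
qed

lemma swap_swap [simp]: "swap_gen (swap_gen g) = g"
  by (cases g) auto

lemma inv_swap: "inv_gen (swap_gen g) = swap_gen (inv_gen g)"
  by (cases g) auto

lemma act_swap: "act Q P (swap_gen g) = act P Q g"
  by (cases g) auto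

lemma eval_swap: "eval_word (map swap_gen W) Q P c = eval_word W P Q c"
  by (induction W) (auto simp: act_swap split: option.splits)

lemma reduced_swap: "reduced (map swap_gen W) \<longleftrightarrow> reduced W"
proof -
  have "swap_gen x = inv_gen (swap_gen y) \<longleftrightarrow> x = inv_gen y" for x y
    by (cases x; cases y) auto
  then show ?thesis unfolding reduced_def by simp
qed

lemma inv_inv [simp]: "inv_gen (inv_gen g) = g"
  by (cases g) auto

lemma reduced_ConsD:
  assumes "reduced (g # W)"
  shows "reduced W" "W \<noteq> [] \<Longrightarrow> g \<noteq> inv_gen (hd W)"
proof -
  show "reduced W" using assms unfolding reduced_def
    by (metis Suc_less_eq length_Cons nth_Cons_Suc)
  assume "W \<noteq> []"
  then have "(g # W) ! Suc 0 \<noteq> inv_gen ((g # W) ! 0)" using assms unfolding reduced_def by auto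
  then have "hd W \<noteq> inv_gen g" using \<open>W \<noteq> []\<close> by (cases W) auto
  then show "g \<noteq> inv_gen (hd W)" by (metis inv_inv)
qed

text \<open>A letter reads either p (the s-letters) or q (the t-letters): base_map is
  the map it reads and other_map the other one.  mono_dir says that an interval is
  monotone in the direction in which the letter moves points: up for s and t, down
  for their inverses.\<close>

definition s_letter :: "gen \<Rightarrow> bool" where "s_letter g \<longleftrightarrow> g = Gs \<or> g = Gs_inv"
definition base_map :: "gen \<Rightarrow> ('a \<rightharpoonup> 'a) \<Rightarrow> ('a \<rightharpoonup> 'a) \<Rightarrow> ('a \<rightharpoonup> 'a)" where
  "base_map g P Q = (if s_letter g then P else Q)"
definition other_map :: "gen \<Rightarrow> ('a \<rightharpoonup> 'a) \<Rightarrow> ('a \<rightharpoonup> 'a) \<Rightarrow> ('a \<rightharpoonup> 'a)" where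
  "other_map g P Q = (if s_letter g then Q else P)"
definition positive_gen :: "gen \<Rightarrow> bool" where "positive_gen g \<longleftrightarrow> g = Gs \<or> g = Gt"
definition mono_dir :: "gen \<Rightarrow> ('a::linorder \<rightharpoonup> 'a) \<Rightarrow> 'a \<Rightarrow> 'a \<Rightarrow> bool" where
  "mono_dir g m a b = (if positive_gen g then p_increasing m a b else p_decreasing m a b)"

lemma swap_props:
  "base_map (swap_gen g) Q P = base_map g P Q" "other_map (swap_gen g) Q P = other_map g P Q"
  "mono_dir (swap_gen g) = mono_dir g"
  unfolding base_map_def other_map_def positive_gen_def mono_dir_def s_letter_def by (cases g; auto)+

section \<open>Monotone intervals and informative chains\<close>

lemma FixD: "x \<in> Fix m \<Longrightarrow> m x = Some x"
  unfolding Fix_def by auto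

lemma FixI: "m x = Some x \<Longrightarrow> x \<in> Fix m"
  unfolding Fix_def by auto

lemma Fix_mono: "m \<subseteq>\<^sub>m m' \<Longrightarrow> Fix m \<subseteq> Fix m'"
  using map_le_apply unfolding Fix_def by fastforce

lemma mono_sub:
  assumes "p_monotone m \<alpha> \<beta>" "\<alpha> \<le> \<alpha>'" "\<beta>' \<le> \<beta>" "\<alpha>' < \<beta>'"
    "m' \<alpha>' = Some \<alpha>'" "m' \<beta>' = Some \<beta>'" "m \<subseteq>\<^sub>m m'" "dom m' \<inter> {\<alpha>'<..<\<beta>'} \<subseteq> dom m"
  shows "p_monotone m' \<alpha>' \<beta>'"
proof -
  have old: "c \<in> dom m \<inter> {\<alpha><..<\<beta>} \<and> m' c = m c" if c: "c \<in> dom m' \<inter> {\<alpha>'<..<\<beta>'}" for c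
  proof -
    obtain v where "m c = Some v" using c assms(8) by blast
    then show ?thesis using c assms(2,3) map_le_apply[OF assms(7)] by auto
  qed
  show ?thesis
    using assms(1,4,5,6) old unfolding p_monotone_def p_increasing_def p_decreasing_def
    by (metis (no_types, lifting) domI)
qed

text \<open>informative_upto a0 m a: a chain of fixed points of m from a0 to a whose
  consecutive intervals are all m-monotone; on [a0,b0] this is informativeness of
  the restriction (see below), and it is the form in which informativeness is
  built up from left to right.\<close>

definition informative_upto :: "'a::linorder \<Rightarrow> ('a \<rightharpoonup> 'a) \<Rightarrow> 'a \<Rightarrow> bool" where
  "informative_upto a0 m a \<longleftrightarrow> (\<exists>F \<subseteq> Fix m. (\<forall>x\<in>F. a0 \<le> x \<and> x \<le> a) \<and> a0 \<in> F \<and> a \<in> F \<and>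
     (\<forall>\<alpha>\<in>F. \<forall>\<beta>\<in>F. \<alpha> < \<beta> \<and> (\<forall>c\<in>F. \<not> (\<alpha> < c \<and> c < \<beta>)) \<longrightarrow> p_monotone m \<alpha> \<beta>))"

lemma informative_upto_ext:
  assumes "informative_upto a0 m a" "m \<subseteq>\<^sub>m m'" "dom m' \<inter> {..a} \<subseteq> dom m"
  shows "informative_upto a0 m' a"
proof -
  obtain F where F: "F \<subseteq> Fix m" "\<forall>x\<in>F. a0 \<le> x \<and> x \<le> a" "a0 \<in> F" "a \<in> F"
    "\<forall>\<alpha>\<in>F. \<forall>\<beta>\<in>F. \<alpha> < \<beta> \<and> (\<forall>c\<in>F. \<not> (\<alpha> < c \<and> c < \<beta>)) \<longrightarrow> p_monotone m \<alpha> \<beta>"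
    using assms(1) unfolding informative_upto_def by blast
  have "F \<subseteq> Fix m'" using F(1) Fix_mono[OF assms(2)] by auto
  moreover have "\<forall>\<alpha>\<in>F. \<forall>\<beta>\<in>F. \<alpha> < \<beta> \<and> (\<forall>c\<in>F. \<not> (\<alpha> < c \<and> c < \<beta>)) \<longrightarrow> p_monotone m' \<alpha> \<beta>"
  proof (intro ballI impI)
    fix \<alpha> \<beta> assume ab: "\<alpha> \<in> F" "\<beta> \<in> F" "\<alpha> < \<beta> \<and> (\<forall>c\<in>F. \<not> (\<alpha> < c \<and> c < \<beta>))"
    have "p_monotone m \<alpha> \<beta>" using F(5) ab by blast
    moreover have "\<alpha> \<in> Fix m'" "\<beta> \<in> Fix m'" using ab(1,2) \<open>F \<subseteq> Fix m'\<close> by auto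
    then have "m' \<alpha> = Some \<alpha>" "m' \<beta> = Some \<beta>" by (simp_all add: FixD)
    moreover have "dom m' \<inter> {\<alpha><..<\<beta>} \<subseteq> dom m"
    proof
      fix c assume c: "c \<in> dom m' \<inter> {\<alpha><..<\<beta>}"
      have "\<beta> \<le> a" using F(2) ab(2) by blast
      then have "c \<le> a" using c by auto
      then show "c \<in> dom m" using assms(3) c by blast
    qed
    ultimately show "p_monotone m' \<alpha> \<beta>" using mono_sub[of m \<alpha> \<beta> \<alpha> \<beta> m'] ab(3) assms(2) by simp
  qed
  ultimately show ?thesis using F(2,3,4) unfolding informative_upto_def by (intro exI[of _ F]) simp
qed

lemma informative_upto_extend:
  fixes a :: "'a::linorder"
  assumes "informative_upto a0 m a" "a < b" "m b = Some b" "p_monotone m a b"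
  shows "informative_upto a0 m b"
proof -
  obtain F where F: "F \<subseteq> Fix m" "\<forall>x\<in>F. a0 \<le> x \<and> x \<le> a" "a0 \<in> F" "a \<in> F"
    "\<forall>\<alpha>\<in>F. \<forall>\<beta>\<in>F. \<alpha> < \<beta> \<and> (\<forall>c\<in>F. \<not> (\<alpha> < c \<and> c < \<beta>)) \<longrightarrow> p_monotone m \<alpha> \<beta>"
    using assms(1) unfolding informative_upto_def by blast
  define F' where "F' = insert b F"
  have "F' \<subseteq> Fix m" using F(1) assms(3) FixI unfolding F'_def by auto
  moreover have "\<forall>x\<in>F'. a0 \<le> x \<and> x \<le> b" using F(2,3) assms(2) unfolding F'_def by force
  moreover have "\<forall>\<alpha>\<in>F'. \<forall>\<beta>\<in>F'. \<alpha> < \<beta> \<and> (\<forall>c\<in>F'. \<not> (\<alpha> < c \<and> c < \<beta>)) \<longrightarrow> p_monotone m \<alpha> \<beta>"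
  proof (intro ballI impI)
    fix \<alpha> \<beta> assume ab: "\<alpha> \<in> F'" "\<beta> \<in> F'" "\<alpha> < \<beta> \<and> (\<forall>c\<in>F'. \<not> (\<alpha> < c \<and> c < \<beta>))"
    show "p_monotone m \<alpha> \<beta>"
    proof (cases "\<beta> = b")
      case True
      have "\<alpha> \<in> F" using ab True unfolding F'_def by auto
      have "\<alpha> = a"
      proof (rule ccontr)
        assume "\<alpha> \<noteq> a"
        then have "\<alpha> < a" using F(2) \<open>\<alpha> \<in> F\<close> by force
        then show False using ab F(4) True assms(2) unfolding F'_def by auto
      qed
      then show ?thesis using True assms(4) by simp
    next
      case False
      then have "\<beta> \<in> F" using ab unfolding F'_def by auto
      then have "\<beta> < b" using F(2) assms(2) by force
      then have "\<alpha> \<in> F" using ab unfolding F'_def by auto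
      then show ?thesis using F(5) ab \<open>\<beta> \<in> F\<close> unfolding F'_def by auto
    qed
  qed
  ultimately show ?thesis unfolding informative_upto_def using F(3) unfolding F'_def by (intro exI[of _ "insert b F"]) simp
qed

lemma informative_upto_restrict:
  fixes a :: "'a::linorder"
  assumes "informative_upto a0 m b" "m a = Some a" "a0 \<le> a" "a \<le> b" "finite (dom m)"
  shows "informative_upto a0 m a"
proof -
  obtain F where F: "F \<subseteq> Fix m" "\<forall>x\<in>F. a0 \<le> x \<and> x \<le> b" "a0 \<in> F" "b \<in> F"
    "\<forall>\<alpha>\<in>F. \<forall>\<beta>\<in>F. \<alpha> < \<beta> \<and> (\<forall>c\<in>F. \<not> (\<alpha> < c \<and> c < \<beta>)) \<longrightarrow> p_monotone m \<alpha> \<beta>"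
    using assms(1) unfolding informative_upto_def by blast
  have finF: "finite F"
  proof -
    have "F \<subseteq> dom m" using F(1) unfolding Fix_def by auto
    moreover have "finite (dom m)" using assms(5) .
    ultimately show ?thesis by (rule finite_subset)
  qed
  define F' where "F' = insert a {x\<in>F. x \<le> a}"
  have "F' \<subseteq> Fix m" using F(1) assms(2) FixI unfolding F'_def by auto
  moreover have "\<forall>x\<in>F'. a0 \<le> x \<and> x \<le> a" using F(2) assms(3) unfolding F'_def by auto
  moreover have "a0 \<in> F'" using F(3) assms(3) unfolding F'_def by auto
  moreover have "\<forall>\<alpha>\<in>F'. \<forall>\<beta>\<in>F'. \<alpha> < \<beta> \<and> (\<forall>c\<in>F'. \<not> (\<alpha> < c \<and> c < \<beta>)) \<longrightarrow> p_monotone m \<alpha> \<beta>"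
  proof (intro ballI impI)
    fix \<alpha> \<beta> assume ab: "\<alpha> \<in> F'" "\<beta> \<in> F'" "\<alpha> < \<beta> \<and> (\<forall>c\<in>F'. \<not> (\<alpha> < c \<and> c < \<beta>))"
    have aF: "\<alpha> \<in> F" using ab unfolding F'_def by auto
    show "p_monotone m \<alpha> \<beta>"
    proof (cases "\<beta> \<in> F")
      case True
      have "\<forall>c\<in>F. \<not> (\<alpha> < c \<and> c < \<beta>)"
      proof (intro ballI notI)
        fix c assume "c \<in> F" "\<alpha> < c \<and> c < \<beta>"
        moreover have "\<beta> \<le> a" using ab unfolding F'_def by auto
        ultimately show False using ab unfolding F'_def by auto
      qed
      then show ?thesis using F(5) aF True ab by blast
    next
      case False
      then have ba: "\<beta> = a" using ab unfolding F'_def by auto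
      define G where "G = {x\<in>F. a < x}"
      have "b \<in> G" using F(4) assms(4) False ba unfolding G_def by (auto simp: le_less)
      have fG: "finite G" using finF unfolding G_def by auto
      define \<gamma> where "\<gamma> = Min G"
      have gG: "\<gamma> \<in> G" unfolding \<gamma>_def using fG \<open>b \<in> G\<close> by (intro Min_in) auto
      have gmin: "\<forall>x\<in>G. \<gamma> \<le> x" unfolding \<gamma>_def using fG by auto
      have "\<forall>c\<in>F. \<not> (\<alpha> < c \<and> c < \<gamma>)"
      proof (intro ballI notI)
        fix c assume c: "c \<in> F" "\<alpha> < c \<and> c < \<gamma>"
        show False
        proof (cases "a < c")
          case True then have "c \<in> G" using c unfolding G_def by auto
          then show False using gmin c by force
        next
          case False
          then have "c < a" using c(1) \<open>\<beta> \<notin> F\<close> ba by (auto simp: not_less le_less)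
          then have "c \<in> F'" using c unfolding F'_def by auto
          then show False using ab c \<open>c < a\<close> ba by auto
        qed
      qed
      moreover have "\<alpha> < \<gamma>" using gG ab ba unfolding G_def by auto
      moreover have "\<gamma> \<in> F" using gG unfolding G_def by auto
      ultimately have "p_monotone m \<alpha> \<gamma>" using F(5) aF by blast
      moreover have "a < \<gamma>" using gG unfolding G_def by auto
      moreover have "\<alpha> \<in> Fix m" using F(1) aF by auto
      ultimately show ?thesis
        using mono_sub[of m \<alpha> \<gamma> \<alpha> a m] FixD[of \<alpha> m] ab ba assms(2)
        by (simp add: order.strict_implies_order)
    qed
  qed
  moreover have "a \<in> F'" unfolding F'_def by simp
  ultimately show ?thesis unfolding informative_upto_def by blast
qed

lemma last_interval:
  fixes m :: "'a::linorder \<rightharpoonup> 'a"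
  assumes "informative_upto a0 m b0" "a0 < b0" "finite (dom m)"
  shows "\<exists>\<alpha>. a0 \<le> \<alpha> \<and> \<alpha> < b0 \<and> m \<alpha> = Some \<alpha> \<and> informative_upto a0 m \<alpha> \<and> p_monotone m \<alpha> b0"
proof -
  obtain F where F: "F \<subseteq> Fix m" "\<forall>x\<in>F. a0 \<le> x \<and> x \<le> b0" "a0 \<in> F" "b0 \<in> F"
    "\<forall>\<alpha>\<in>F. \<forall>\<beta>\<in>F. \<alpha> < \<beta> \<and> (\<forall>c\<in>F. \<not> (\<alpha> < c \<and> c < \<beta>)) \<longrightarrow> p_monotone m \<alpha> \<beta>"
    using assms(1) unfolding informative_upto_def by blast
  have finF: "finite F"
  proof -
    have "F \<subseteq> dom m" using F(1) unfolding Fix_def by auto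
    then show ?thesis using assms(3) by (rule finite_subset)
  qed
  define G where "G = {x\<in>F. x < b0}"
  have fG: "finite G" using finF unfolding G_def by auto
  have a0G: "a0 \<in> G" using F(3) assms(2) unfolding G_def by auto
  define \<alpha> where "\<alpha> = Max G"
  have aG: "\<alpha> \<in> G" unfolding \<alpha>_def using fG a0G by (intro Max_in) auto
  have amax: "\<forall>x\<in>G. x \<le> \<alpha>" unfolding \<alpha>_def using fG by auto
  have aF: "\<alpha> \<in> F" "\<alpha> < b0" using aG unfolding G_def by auto
  have "\<alpha> \<in> Fix m" using F(1) aF by auto
  then have fa: "m \<alpha> = Some \<alpha>" by (rule FixD)
  have a0a: "a0 \<le> \<alpha>" using amax a0G by auto
  have "\<forall>c\<in>F. \<not> (\<alpha> < c \<and> c < b0)"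
  proof (intro ballI notI)
    fix c assume "c \<in> F" "\<alpha> < c \<and> c < b0"
    then have "c \<in> G" unfolding G_def by auto
    then show False using amax \<open>\<alpha> < c \<and> c < b0\<close> by force
  qed
  then have "p_monotone m \<alpha> b0" using F(5) aF F(4) by blast
  moreover have "informative_upto a0 m \<alpha>" using informative_upto_restrict[OF assms(1) fa a0a _ assms(3)] aF by simp
  ultimately show ?thesis using a0a aF fa by blast
qed
section \<open>Extending a map inside a monotone interval\<close>

lemma map_le_upd_new: "x \<notin> dom R \<Longrightarrow> R \<subseteq>\<^sub>m R(x \<mapsto> y)"
  by (auto simp: map_le_def)

lemma extend_increasing_point:
  fixes d :: "'a::linorder \<Rightarrow> 'a \<Rightarrow> rat"
  assumes QU: "QU_prec d" and pi: "partial_iso d R" and inc: "p_increasing R a b0"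
    and fT: "finite T" and Tb: "\<forall>t\<in>T. t < b0"
    and Ti: "\<forall>z w. R z = Some w \<and> a < z \<and> z < b0 \<longrightarrow> (\<forall>t\<in>T. t < w)"
    and xab: "a < x" "x < b0" and nx: "x \<notin> dom R"
  shows "\<exists>y. partial_iso d (R(x \<mapsto> y)) \<and> p_increasing (R(x \<mapsto> y)) a b0 \<and> (\<forall>t\<in>insert x T. t < y)"
proof -
  have Rab: "R a = Some a" "R b0 = Some b0" using inc unfolding p_increasing_def by auto
  have "\<forall>t\<in>insert x T. t < w" if zw: "R z = Some w" "x < z" for z w
  proof (cases "z < b0")
    case True
    have az: "a < z" using zw xab by auto
    then have "z \<in> dom R \<inter> {a<..<b0}" using zw True by auto
    then have "z < the (R z)" using inc unfolding p_increasing_def by blast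
    then have "z < w" using zw by simp
    moreover have "\<forall>t\<in>T. t < w" using Ti zw(1) az True by blast
    ultimately show ?thesis using zw by auto
  next
    case False
    then have "b0 \<le> w" using piso_mono_iff(2)[OF pi Rab(2) zw(1)] by (auto simp: not_less)
    then show ?thesis using Tb xab by auto
  qed
  moreover have "ran R \<noteq> {}" using Rab by (auto simp: ran_def)
  ultimately obtain y where y: "partial_iso d (R(x \<mapsto> y))" "\<forall>t\<in>insert x T. t < y"
    using extend_forward[OF QU pi nx _ finite.insertI[OF fT]] by blast
  have "c < the ((R(x \<mapsto> y)) c)" if "c \<in> dom (R(x \<mapsto> y)) \<inter> {a<..<b0}" for c
    using that inc y(2) unfolding p_increasing_def by (cases "c = x") auto
  then have "p_increasing (R(x \<mapsto> y)) a b0"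
    using inc xab unfolding p_increasing_def by auto
  then show ?thesis using y by blast
qed

lemma extend_increasing:
  fixes d :: "'a::linorder \<Rightarrow> 'a \<Rightarrow> rat"
  assumes QU: "QU_prec d" and pi: "partial_iso d R"
    and inc: "p_increasing R a b0"
    and fT: "finite T" and Tb: "\<forall>t\<in>T. t < b0"
    and Ti: "\<forall>z w. R z = Some w \<and> a < z \<and> z < b0 \<longrightarrow> (\<forall>t\<in>T. t < w)"
    and fX: "finite X" and Xs: "X \<subseteq> {a<..<b0}"
  shows "\<exists>R'. R \<subseteq>\<^sub>m R' \<and> partial_iso d R' \<and> dom R' \<subseteq> dom R \<union> {a<..<b0} \<and> p_increasing R' a b0 \<and>
           X \<subseteq> dom R' \<and> (\<forall>z w. R' z = Some w \<and> a < z \<and> z < b0 \<longrightarrow> (\<forall>t\<in>T. t < w))"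
  using fX Xs
proof (induction X rule: finite_induct)
  case empty
  show ?case by (intro exI[of _ R] conjI map_le_refl pi inc Ti empty_subsetI Un_upper1)
next
  case (insert x X)
  obtain R1 where R1: "R \<subseteq>\<^sub>m R1" "partial_iso d R1" "dom R1 \<subseteq> dom R \<union> {a<..<b0}"
    "p_increasing R1 a b0" "X \<subseteq> dom R1" "\<forall>z w. R1 z = Some w \<and> a < z \<and> z < b0 \<longrightarrow> (\<forall>t\<in>T. t < w)"
    using insert.IH insert.prems by blast
  have xab: "a < x" "x < b0" using insert.prems by auto
  show ?case
  proof (cases "x \<in> dom R1")
    case True
    then have "insert x X \<subseteq> dom R1" using R1(5) by auto
    then show ?thesis using R1(1-4,6) by (intro exI[of _ R1] conjI)
  next
    case False
    obtain y where y: "partial_iso d (R1(x \<mapsto> y))" "p_increasing (R1(x \<mapsto> y)) a b0" "\<forall>t\<in>insert x T. t < y"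
      using extend_increasing_point[OF QU R1(2) R1(4) fT Tb R1(6) xab False] by blast
    have "\<forall>z w. (R1(x \<mapsto> y)) z = Some w \<and> a < z \<and> z < b0 \<longrightarrow> (\<forall>t\<in>T. t < w)"
    proof (intro allI impI)
      fix z w assume zw: "(R1(x \<mapsto> y)) z = Some w \<and> a < z \<and> z < b0"
      show "\<forall>t\<in>T. t < w"
      proof (cases "z = x")
        case True then show ?thesis using zw y(3) by simp
      next
        case False
        then have "R1 z = Some w" using zw by simp
        then show ?thesis using R1(6) zw by blast
      qed
    qed
    moreover have "R \<subseteq>\<^sub>m R1(x \<mapsto> y)" using map_le_trans[OF R1(1) map_le_upd_new[OF False]] .
    moreover have "dom (R1(x \<mapsto> y)) \<subseteq> dom R \<union> {a<..<b0}" using R1(3) xab by auto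
    moreover have "insert x X \<subseteq> dom (R1(x \<mapsto> y))" using R1(5) by auto
    ultimately show ?thesis using y(1,2) by (intro exI[of _ "R1(x \<mapsto> y)"] conjI)
  qed
qed

lemma pinv_in_interval:
  fixes R :: "'a::linorder \<rightharpoonup> 'a"
  assumes pi: "partial_iso d R" and "R a = Some a" "R b = Some b" "pinv R c = Some z"
  shows "R z = Some c" "a < c \<longleftrightarrow> a < z" "c < b \<longleftrightarrow> z < b"
proof -
  show rz: "R z = Some c" using assms(4) pinv_iff[OF pi] by simp
  show "a < c \<longleftrightarrow> a < z" "c < b \<longleftrightarrow> z < b" using fixed_ends_between[OF pi assms(2,3) rz] by auto
qed

lemma pinv_monotone:
  fixes R :: "'a::linorder \<rightharpoonup> 'a"
  assumes pi: "partial_iso d R"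
  shows "p_decreasing R a b \<Longrightarrow> p_increasing (pinv R) a b"
    and "p_increasing R a b \<Longrightarrow> p_decreasing (pinv R) a b"
proof -
  have ends: "pinv R a = Some a" "pinv R b = Some b" if "R a = Some a" "R b = Some b"
    using that pinv_iff[OF pi] by auto
  show "p_increasing (pinv R) a b" if dec: "p_decreasing R a b"
    unfolding p_increasing_def
  proof (intro conjI ballI)
    fix c assume "c \<in> dom (pinv R) \<inter> {a<..<b}"
    then obtain z where z: "pinv R c = Some z" and c: "a < c" "c < b" by auto
    have Rab: "R a = Some a" "R b = Some b" using dec unfolding p_decreasing_def by auto
    note zc = pinv_in_interval[OF pi Rab z]
    have "the (R z) < z" using dec zc c unfolding p_decreasing_def by (force simp: domI)
    then show "c < the (pinv R c)" using zc(1) z by simp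
  qed (use dec ends in \<open>auto simp: p_decreasing_def\<close>)
  show "p_decreasing (pinv R) a b" if inc: "p_increasing R a b"
    unfolding p_decreasing_def
  proof (intro conjI ballI)
    fix c assume "c \<in> dom (pinv R) \<inter> {a<..<b}"
    then obtain z where z: "pinv R c = Some z" and c: "a < c" "c < b" by auto
    have Rab: "R a = Some a" "R b = Some b" using inc unfolding p_increasing_def by auto
    note zc = pinv_in_interval[OF pi Rab z]
    have "z < the (R z)" using inc zc c unfolding p_increasing_def by (force simp: domI)
    then show "the (pinv R c) < c" using zc(1) z by simp
  qed (use inc ends in \<open>auto simp: p_increasing_def\<close>)
qed

text \<open>The decreasing case, obtained from the increasing one for the inverse map:
  X is added to the range, and the arguments of points of the interval stay
  above T.\<close>

lemma extend_decreasing: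
  fixes d :: "'a::linorder \<Rightarrow> 'a \<Rightarrow> rat"
  assumes QU: "QU_prec d" and pi: "partial_iso d R" and ab: "a < b0"
    and dec: "p_decreasing R a b0"
    and fT: "finite T" and Tb: "\<forall>t\<in>T. t < b0"
    and Ti: "\<forall>z w. R z = Some w \<and> a < z \<and> z < b0 \<longrightarrow> (\<forall>t\<in>T. t < z)"
    and fX: "finite X" and Xs: "X \<subseteq> {a<..<b0}"
  shows "\<exists>R'. R \<subseteq>\<^sub>m R' \<and> partial_iso d R' \<and> dom R' \<subseteq> dom R \<union> {a<..<b0} \<and> p_decreasing R' a b0 \<and>
           X \<subseteq> ran R' \<and> (\<forall>z w. R' z = Some w \<and> a < z \<and> z < b0 \<longrightarrow> (\<forall>t\<in>T. t < z))"
proof -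
  have Rab: "R a = Some a" "R b0 = Some b0" using dec unfolding p_decreasing_def by auto
  define S where "S = pinv R"
  have piS: "partial_iso d S" unfolding S_def using piso_pinv[OF pi] .
  have S_iff: "S w = Some z \<longleftrightarrow> R z = Some w" for w z unfolding S_def using pinv_iff[OF pi] .
  have TiS: "\<forall>w z. S w = Some z \<and> a < w \<and> w < b0 \<longrightarrow> (\<forall>t\<in>T. t < z)"
    using Ti fixed_ends_between[OF pi Rab] S_iff by blast
  obtain S' where S': "S \<subseteq>\<^sub>m S'" "partial_iso d S'" "dom S' \<subseteq> dom S \<union> {a<..<b0}"
      "p_increasing S' a b0" "X \<subseteq> dom S'" "\<forall>w z. S' w = Some z \<and> a < w \<and> w < b0 \<longrightarrow> (\<forall>t\<in>T. t < z)"
    using extend_increasing[OF QU piS pinv_monotone(1)[OF pi dec, folded S_def] fT Tb TiS fX Xs]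
    by blast
  have S'ab: "S' a = Some a" "S' b0 = Some b0" using S'(4) unfolding p_increasing_def by auto
  have R'_iff: "pinv S' z = Some w \<longleftrightarrow> S' w = Some z" for z w using pinv_iff[OF S'(2)] .
  have "R \<subseteq>\<^sub>m pinv S'"
    unfolding map_le_def
  proof
    fix z assume "z \<in> dom R"
    then obtain w where w: "R z = Some w" by blast
    then have "S' w = Some z" using S_iff map_le_apply[OF S'(1)] by blast
    then have "pinv S' z = Some w" using R'_iff by blast
    then show "R z = pinv S' z" using w by simp
  qed
  moreover have "dom (pinv S') \<subseteq> dom R \<union> {a<..<b0}"
  proof
    fix z assume "z \<in> dom (pinv S')"
    then obtain w where w: "S' w = Some z" using R'_iff by blast
    show "z \<in> dom R \<union> {a<..<b0}"
    proof (cases "w \<in> dom S")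
      case True
      then have "S w = Some z" using w map_le_apply[OF S'(1)] by fastforce
      then show ?thesis using S_iff by blast
    next
      case False
      then have "a < w" "w < b0" using w S'(3) by auto
      then show ?thesis using fixed_ends_between[OF S'(2) S'ab w] by auto
    qed
  qed
  moreover have "X \<subseteq> ran (pinv S')" using S'(5) R'_iff by (fastforce simp: ran_def)
  moreover have "\<forall>z w. pinv S' z = Some w \<and> a < z \<and> z < b0 \<longrightarrow> (\<forall>t\<in>T. t < z)"
    using S'(6) R'_iff fixed_ends_between[OF S'(2) S'ab] by blast
  ultimately show ?thesis
    using piso_pinv[OF S'(2)] pinv_monotone(2)[OF S'(2) S'(4)] by blast
qed

lemma push_through:
  fixes d :: "'a::linorder \<Rightarrow> 'a \<Rightarrow> rat"
  assumes QU: "QU_prec d" and pi: "partial_iso d Q" and g: "g = Gt \<or> g = Gt_inv"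
    and ab: "a < b" and mono: "mono_dir g Q a b"
    and fT: "finite T" and Tb: "\<forall>t\<in>T. t < b"
    and Ti: "\<forall>z w. Q z = Some w \<and> a < z \<and> z < b \<longrightarrow> (\<forall>t\<in>T. t < max z w)"
    and fX: "finite X" and Xs: "X \<subseteq> {a<..<b}"
  shows "\<exists>Q'. Q \<subseteq>\<^sub>m Q' \<and> partial_iso d Q' \<and> dom Q' \<subseteq> dom Q \<union> {a<..<b} \<and> mono_dir g Q' a b \<and>
     (\<forall>x\<in>X. \<exists>y. act P Q' g x = Some y \<and> x < y \<and> y < b \<and> (\<forall>t\<in>T. t < y))"
proof (cases "g = Gt")
  case True
  then have inc: "p_increasing Q a b" using mono unfolding mono_dir_def positive_gen_def by simp
  have Ti': "\<forall>z w. Q z = Some w \<and> a < z \<and> z < b \<longrightarrow> (\<forall>t\<in>T. t < w)"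
  proof (intro allI impI)
    fix z w assume zw: "Q z = Some w \<and> a < z \<and> z < b"
    then have "z < w" using inc unfolding p_increasing_def by force
    then have "max z w = w" by simp
    moreover have "\<forall>t\<in>T. t < max z w" using Ti zw by blast
    ultimately show "\<forall>t\<in>T. t < w" by simp
  qed
  obtain Q' where Q': "Q \<subseteq>\<^sub>m Q'" "partial_iso d Q'" "dom Q' \<subseteq> dom Q \<union> {a<..<b}"
      "p_increasing Q' a b" "X \<subseteq> dom Q'" "\<forall>z w. Q' z = Some w \<and> a < z \<and> z < b \<longrightarrow> (\<forall>t\<in>T. t < w)"
    using extend_increasing[OF QU pi inc fT Tb Ti' fX Xs] by blast
  have Q'ab: "Q' a = Some a" "Q' b = Some b" using Q'(4) unfolding p_increasing_def by auto
  have "\<exists>y. act P Q' g x = Some y \<and> x < y \<and> y < b \<and> (\<forall>t\<in>T. t < y)" if x: "x \<in> X" for x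
  proof -
    obtain y where y: "Q' x = Some y" using Q'(5) x by auto
    have xab: "a < x" "x < b" using x Xs by auto
    then have "x \<in> dom Q' \<inter> {a<..<b}" using y by auto
    then have "x < the (Q' x)" using Q'(4) unfolding p_increasing_def by blast
    then have "x < y" using y by simp
    moreover have "y < b" using fixed_ends_between(4)[OF Q'(2) Q'ab y] xab by simp
    moreover have "\<forall>t\<in>T. t < y" using Q'(6) y xab by blast
    ultimately show ?thesis using True y by simp
  qed
  moreover have "mono_dir g Q' a b" using Q'(4) True unfolding mono_dir_def positive_gen_def by simp
  ultimately show ?thesis using Q'(1-3) by blast
next
  case False
  then have gi: "g = Gt_inv" using g by simp
  then have dec: "p_decreasing Q a b" using mono unfolding mono_dir_def positive_gen_def by simp
  have Ti': "\<forall>z w. Q z = Some w \<and> a < z \<and> z < b \<longrightarrow> (\<forall>t\<in>T. t < z)"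
  proof (intro allI impI)
    fix z w assume zw: "Q z = Some w \<and> a < z \<and> z < b"
    then have "w < z" using dec unfolding p_decreasing_def by force
    then have "max z w = z" by simp
    moreover have "\<forall>t\<in>T. t < max z w" using Ti zw by blast
    ultimately show "\<forall>t\<in>T. t < z" by simp
  qed
  obtain Q' where Q': "Q \<subseteq>\<^sub>m Q'" "partial_iso d Q'" "dom Q' \<subseteq> dom Q \<union> {a<..<b}"
      "p_decreasing Q' a b" "X \<subseteq> ran Q'" "\<forall>z w. Q' z = Some w \<and> a < z \<and> z < b \<longrightarrow> (\<forall>t\<in>T. t < z)"
    using extend_decreasing[OF QU pi ab dec fT Tb Ti' fX Xs] by blast
  have Q'ab: "Q' a = Some a" "Q' b = Some b" using Q'(4) unfolding p_decreasing_def by auto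
  have "\<exists>y. act P Q' g x = Some y \<and> x < y \<and> y < b \<and> (\<forall>t\<in>T. t < y)" if x: "x \<in> X" for x
  proof -
    obtain z where z: "Q' z = Some x" using Q'(5) x by (auto simp: ran_def)
    have "a < x" "x < b" using x Xs by auto
    then have zab: "a < z" "z < b" using fixed_ends_between(3,4)[OF Q'(2) Q'ab z] by simp_all
    then have "z \<in> dom Q' \<inter> {a<..<b}" using z by auto
    then have "the (Q' z) < z" using Q'(4) unfolding p_decreasing_def by blast
    then have "x < z" using z by simp
    moreover have "\<forall>t\<in>T. t < z" using Q'(6) z zab by blast
    moreover have "act P Q' g x = Some z" using gi pinv_iff[OF Q'(2)] z by simp
    ultimately show ?thesis using zab by blast
  qed
  moreover have "mono_dir g Q' a b" using Q'(4) gi unfolding mono_dir_def positive_gen_def by simp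
  ultimately show ?thesis using Q'(1-3) by blast
qed

section \<open>Restriction to an interval between common fixed points\<close>

text \<open>Throughout, [a0,b0] is an interval whose ends are fixed by all maps considered
  (fixes_ends); liberation only sees the restrictions of the maps to [a0,b0], whose
  essential points are the inner points of the maps.\<close>

definition inner_points :: "'a::linorder \<Rightarrow> 'a \<Rightarrow> ('a \<rightharpoonup> 'a) \<Rightarrow> 'a set" where
  "inner_points a0 b0 m = (dom m \<union> ran m) \<inter> {a0<..<b0}"

lemma inner_points_finite:
  assumes "partial_iso d m" shows "finite (inner_points a0 b0 m)"
  using piso_fin[OF assms] unfolding inner_points_def by (simp add: finite_ran)

locale closed_interval =
  fixes d :: "'a::linorder \<Rightarrow> 'a \<Rightarrow> rat" and a0 b0 :: 'a
  assumes ab: "a0 < b0"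
begin

definition "fixes_ends m \<longleftrightarrow> partial_iso d m \<and> m a0 = Some a0 \<and> m b0 = Some b0"

lemma fixes_ends_between:
  assumes "fixes_ends m" "m x = Some y"
  shows "a0 \<le> x \<longleftrightarrow> a0 \<le> y" "x \<le> b0 \<longleftrightarrow> y \<le> b0" "a0 < x \<longleftrightarrow> a0 < y" "x < b0 \<longleftrightarrow> y < b0"
  using fixed_ends_between[of d m a0 b0 x y] assms unfolding fixes_ends_def by auto

lemma restr_MinMax:
  assumes "fixes_ends m"
  shows "Min (dom (m |` {a0..b0})) = a0" "Max (dom (m |` {a0..b0})) = b0"
proof -
  have f: "finite (dom (m |` {a0..b0}))" using assms unfolding fixes_ends_def partial_iso_def by auto
  have i: "a0 \<in> dom (m |` {a0..b0})" "b0 \<in> dom (m |` {a0..b0})" using assms ab unfolding fixes_ends_def by auto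
  show "Min (dom (m |` {a0..b0})) = a0" using f i by (intro Min_eqI) auto
  show "Max (dom (m |` {a0..b0})) = b0" using f i by (intro Max_eqI) auto
qed

lemma restr_Ess:
  assumes "fixes_ends m"
  shows "Ess (m |` {a0..b0}) = inner_points a0 b0 m"
proof -
  have "(dom (m |` {a0..b0}) \<union> ran (m |` {a0..b0})) - {a0, b0} = (dom m \<union> ran m) \<inter> {a0<..<b0}"
  proof (intro equalityI subsetI)
    fix v assume v: "v \<in> (dom (m |` {a0..b0}) \<union> ran (m |` {a0..b0})) - {a0, b0}"
    then show "v \<in> (dom m \<union> ran m) \<inter> {a0<..<b0}"
    proof (cases "v \<in> dom (m |` {a0..b0})")
      case True then show ?thesis using v by auto
    next
      case False
      then obtain x where x: "(m |` {a0..b0}) x = Some v" using v by (auto simp: ran_def)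
      then have "x \<in> {a0..b0}" "m x = Some v" by (auto simp: restrict_map_def split: if_splits)
      then have "v \<in> {a0..b0}" using fixes_ends_between[OF assms] by auto
      then show ?thesis using v \<open>m x = Some v\<close> by (auto simp: ran_def)
    qed
  next
    fix v assume v: "v \<in> (dom m \<union> ran m) \<inter> {a0<..<b0}"
    show "v \<in> (dom (m |` {a0..b0}) \<union> ran (m |` {a0..b0})) - {a0, b0}"
    proof (cases "v \<in> dom m")
      case True then show ?thesis using v by auto
    next
      case False
      then obtain x where x: "m x = Some v" using v by (auto simp: ran_def)
      then have "x \<in> {a0<..<b0}" using fixes_ends_between[OF assms x] v by auto
      then have "(m |` {a0..b0}) x = Some v" using x by (simp add: restrict_map_def less_imp_le)
      then show ?thesis using v by (auto simp: ran_def)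
    qed
  qed
  then show ?thesis unfolding Ess_def inner_points_def using restr_MinMax[OF assms] by simp
qed

lemma restr_Fix: "Fix (m |` {a0..b0}) = Fix m \<inter> {a0..b0}"
  unfolding Fix_def by (auto simp: restrict_map_def split: if_splits)

lemma restr_inc:
  assumes "\<alpha> \<in> {a0..b0}" "\<beta> \<in> {a0..b0}"
  shows "p_increasing (m |` {a0..b0}) \<alpha> \<beta> \<longleftrightarrow> p_increasing m \<alpha> \<beta>"
    "p_decreasing (m |` {a0..b0}) \<alpha> \<beta> \<longleftrightarrow> p_decreasing m \<alpha> \<beta>"
    "p_monotone (m |` {a0..b0}) \<alpha> \<beta> \<longleftrightarrow> p_monotone m \<alpha> \<beta>"
proof -
  have e: "dom (m |` {a0..b0}) \<inter> {\<alpha><..<\<beta>} = dom m \<inter> {\<alpha><..<\<beta>}" using assms by auto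
  have v: "(m |` {a0..b0}) c = m c" if "c \<in> {\<alpha><..<\<beta>}" for c
  proof -
    have "a0 \<le> c" "c \<le> b0" using assms that
      by (meson atLeastAtMost_iff greaterThanLessThan_iff less_imp_le order_trans)+
    then show ?thesis by (simp add: restrict_map_def)
  qed
  show 1: "p_increasing (m |` {a0..b0}) \<alpha> \<beta> \<longleftrightarrow> p_increasing m \<alpha> \<beta>"
    unfolding p_increasing_def e using assms v by auto
  show 2: "p_decreasing (m |` {a0..b0}) \<alpha> \<beta> \<longleftrightarrow> p_decreasing m \<alpha> \<beta>"
    unfolding p_decreasing_def e using assms v by auto
  show "p_monotone (m |` {a0..b0}) \<alpha> \<beta> \<longleftrightarrow> p_monotone m \<alpha> \<beta>"
    unfolding p_monotone_def 1 2 ..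
qed

lemma act_restr:
  assumes "fixes_ends P" "fixes_ends Q" "x \<in> {a0..b0}"
  shows "act (P |` {a0..b0}) (Q |` {a0..b0}) g x = act P Q g x \<and>
         (\<forall>y. act P Q g x = Some y \<longrightarrow> y \<in> {a0..b0})"
proof -
  have gen: "pinv (m |` {a0..b0}) x = pinv m x \<and> (\<forall>y. pinv m x = Some y \<longrightarrow> y \<in> {a0..b0})"
    if fm: "fixes_ends m" for m
  proof -
    have pm: "partial_iso d m" and pr: "partial_iso d (m |` {a0..b0})"
      using fm piso_restrict unfolding fixes_ends_def by auto
    have 1: "y \<in> {a0..b0}" if py: "pinv m x = Some y" for y
    proof -
      have "m y = Some x" using pinv_iff[OF pm] py by simp
      then show ?thesis using fixes_ends_between[OF fm] assms(3) by auto
    qed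
    have "pinv (m |` {a0..b0}) x = pinv m x"
    proof (cases "pinv m x")
      case None
      show ?thesis
      proof (rule ccontr)
        assume "pinv (m |` {a0..b0}) x \<noteq> pinv m x"
        then obtain y where "pinv (m |` {a0..b0}) x = Some y" using None by auto
        then have "(m |` {a0..b0}) y = Some x" using pinv_iff[OF pr] by simp
        then have "m y = Some x" by (auto simp: restrict_map_def split: if_splits)
        then have "pinv m x = Some y" using pinv_iff[OF pm] by simp
        then show False using None by simp
      qed
    next
      case (Some y)
      then have "m y = Some x" "y \<in> {a0..b0}" using pinv_iff[OF pm] 1 by auto
      then have "(m |` {a0..b0}) y = Some x" by auto
      then show ?thesis using Some pinv_iff[OF pr] by simp
    qed
    then show ?thesis using 1 by auto
  qed
  have gen2: "(m |` {a0..b0}) x = m x \<and> (\<forall>y. m x = Some y \<longrightarrow> y \<in> {a0..b0})"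
    if fm: "fixes_ends m" for m
    using assms(3) fixes_ends_between[OF fm] by auto
  show ?thesis using gen[OF assms(1)] gen[OF assms(2)] gen2[OF assms(1)] gen2[OF assms(2)]
    by (cases g) auto
qed

lemma eval_restr:
  assumes "fixes_ends P" "fixes_ends Q" "c \<in> {a0..b0}"
  shows "eval_word W (P |` {a0..b0}) (Q |` {a0..b0}) c = eval_word W P Q c \<and>
         (\<forall>y. eval_word W P Q c = Some y \<longrightarrow> y \<in> {a0..b0})"
proof (induction W)
  case Nil then show ?case using assms by simp
next
  case (Cons g W)
  show ?case
  proof (cases "eval_word W P Q c")
    case None then show ?thesis using Cons by simp
  next
    case (Some x)
    then have "x \<in> {a0..b0}" using Cons by simp
    then show ?thesis using Some Cons act_restr[OF assms(1,2), of x g] by simp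
  qed
qed

lemma informative_upto_of_informative:
  assumes fm: "fixes_ends m" and inf: "informative (m |` {a0..b0})"
  shows "informative_upto a0 m b0"
proof -
  obtain F where F: "F \<subseteq> Fix (m |` {a0..b0})" "Min (dom (m |` {a0..b0})) \<in> F" "Max (dom (m |` {a0..b0})) \<in> F"
    "\<forall>a\<in>F. \<forall>b\<in>F. a < b \<and> (\<forall>c\<in>F. \<not> (a < c \<and> c < b)) \<longrightarrow> p_monotone (m |` {a0..b0}) a b"
    using inf unfolding informative_def by blast
  have F1: "F \<subseteq> Fix m" "F \<subseteq> {a0..b0}" using F(1) restr_Fix by auto
  have "a0 \<in> F" "b0 \<in> F" using F(2,3) restr_MinMax[OF fm] by auto
  moreover have "\<forall>x\<in>F. a0 \<le> x \<and> x \<le> b0" using F1 by auto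
  moreover have "\<forall>\<alpha>\<in>F. \<forall>\<beta>\<in>F. \<alpha> < \<beta> \<and> (\<forall>c\<in>F. \<not> (\<alpha> < c \<and> c < \<beta>)) \<longrightarrow> p_monotone m \<alpha> \<beta>"
  proof (intro ballI impI)
    fix \<alpha> \<beta> assume ab: "\<alpha> \<in> F" "\<beta> \<in> F" "\<alpha> < \<beta> \<and> (\<forall>c\<in>F. \<not> (\<alpha> < c \<and> c < \<beta>))"
    then have "p_monotone (m |` {a0..b0}) \<alpha> \<beta>" using F(4) by blast
    moreover have "\<alpha> \<in> {a0..b0}" "\<beta> \<in> {a0..b0}" using ab F1 by auto
    ultimately show "p_monotone m \<alpha> \<beta>" using restr_inc(3) by blast
  qed
  ultimately show ?thesis unfolding informative_upto_def using F1(1) by blast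
qed

lemma informative_of_informative_upto:
  assumes fm: "fixes_ends m" and iu: "informative_upto a0 m b0"
  shows "informative (m |` {a0..b0})"
proof -
  obtain F where F: "F \<subseteq> Fix m" "\<forall>x\<in>F. a0 \<le> x \<and> x \<le> b0" "a0 \<in> F" "b0 \<in> F"
    "\<forall>\<alpha>\<in>F. \<forall>\<beta>\<in>F. \<alpha> < \<beta> \<and> (\<forall>c\<in>F. \<not> (\<alpha> < c \<and> c < \<beta>)) \<longrightarrow> p_monotone m \<alpha> \<beta>"
    using iu unfolding informative_upto_def by blast
  have F1: "F \<subseteq> Fix (m |` {a0..b0})" using F(1,2) restr_Fix by auto
  have mm: "Min (dom (m |` {a0..b0})) = a0" "Max (dom (m |` {a0..b0})) = b0" using restr_MinMax[OF fm] by auto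
  have pm: "partial_iso d m" "m a0 = Some a0" "m b0 = Some b0" using fm unfolding fixes_ends_def by auto
  have fin: "finite (dom (m |` {a0..b0}))" using piso_fin[OF piso_restrict[OF pm(1)]] .
  have ne: "dom (m |` {a0..b0}) \<noteq> {}" using pm(2) ab by auto
  have v: "(m |` {a0..b0}) a0 = Some a0" "(m |` {a0..b0}) b0 = Some b0" using pm ab by auto
  have "\<forall>\<alpha>\<in>F. \<forall>\<beta>\<in>F. \<alpha> < \<beta> \<and> (\<forall>c\<in>F. \<not> (\<alpha> < c \<and> c < \<beta>)) \<longrightarrow> p_monotone (m |` {a0..b0}) \<alpha> \<beta>"
  proof (intro ballI impI)
    fix \<alpha> \<beta> assume ab: "\<alpha> \<in> F" "\<beta> \<in> F" "\<alpha> < \<beta> \<and> (\<forall>c\<in>F. \<not> (\<alpha> < c \<and> c < \<beta>))"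
    then have "p_monotone m \<alpha> \<beta>" using F(5) by blast
    moreover have "\<alpha> \<in> {a0..b0}" "\<beta> \<in> {a0..b0}" using ab F(2) by auto
    ultimately show "p_monotone (m |` {a0..b0}) \<alpha> \<beta>" using restr_inc(3) by blast
  qed
  then show ?thesis unfolding informative_def mm using fin ne v F1 F(3,4) by blast
qed

end

section \<open>The invariant and its one-letter steps\<close>

text \<open>push_inv d a0 b0 E W P Q: the invariant kept while the word W acting on the
  finite set E of essential points grows on the left.\<close>

definition push_inv :: "('a::linorder \<Rightarrow> 'a \<Rightarrow> rat) \<Rightarrow> 'a \<Rightarrow> 'a \<Rightarrow> 'a set \<Rightarrow> gen list \<Rightarrow>
    ('a \<rightharpoonup> 'a) \<Rightarrow> ('a \<rightharpoonup> 'a) \<Rightarrow> bool" where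
  "push_inv d a0 b0 E W P Q \<longleftrightarrow>
     partial_iso d P \<and> partial_iso d Q \<and> P a0 = Some a0 \<and> P b0 = Some b0 \<and>
     Q a0 = Some a0 \<and> Q b0 = Some b0 \<and> a0 < b0 \<and> W \<noteq> [] \<and> finite E \<and> E \<subseteq> {a0<..<b0} \<and>
     informative_upto a0 (other_map (hd W) P Q) b0 \<and>
     (\<exists>a. a0 \<le> a \<and> a < b0 \<and> mono_dir (hd W) (base_map (hd W) P Q) a b0 \<and>
          informative_upto a0 (base_map (hd W) P Q) a \<and>
          (\<forall>c\<in>E. \<exists>y. eval_word W P Q c = Some y \<and> a < y \<and> y < b0 \<and>
                     (\<forall>v\<in>inner_points a0 b0 (other_map (hd W) P Q). v < y)))"

lemma push_inv_elim:
  assumes "push_inv d a0 b0 E W P Q"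
  shows "partial_iso d P" "partial_iso d Q" "P a0 = Some a0" "P b0 = Some b0"
    "Q a0 = Some a0" "Q b0 = Some b0" "a0 < b0" "W \<noteq> []" "finite E" "E \<subseteq> {a0<..<b0}"
    "informative_upto a0 (other_map (hd W) P Q) b0"
    "\<exists>a. a0 \<le> a \<and> a < b0 \<and> mono_dir (hd W) (base_map (hd W) P Q) a b0 \<and>
        informative_upto a0 (base_map (hd W) P Q) a \<and>
        (\<forall>c\<in>E. \<exists>y. eval_word W P Q c = Some y \<and> a < y \<and> y < b0 \<and>
                   (\<forall>v\<in>inner_points a0 b0 (other_map (hd W) P Q). v < y))"
  using assms unfolding push_inv_def by blast+

lemma push_inv_intro:
  assumes "partial_iso d P" "partial_iso d Q" "P a0 = Some a0" "P b0 = Some b0"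
    "Q a0 = Some a0" "Q b0 = Some b0" "a0 < b0" "W \<noteq> []" "finite E" "E \<subseteq> {a0<..<b0}"
    "informative_upto a0 (other_map (hd W) P Q) b0"
    "a0 \<le> a" "a < b0" "mono_dir (hd W) (base_map (hd W) P Q) a b0"
    "informative_upto a0 (base_map (hd W) P Q) a"
    "\<forall>c\<in>E. \<exists>y. eval_word W P Q c = Some y \<and> a < y \<and> y < b0 \<and>
               (\<forall>v\<in>inner_points a0 b0 (other_map (hd W) P Q). v < y)"
  shows "push_inv d a0 b0 E W P Q"
  unfolding push_inv_def using assms by blast

lemma push_inv_swap:
  assumes "push_inv d a0 b0 E W P Q"
  shows "push_inv d a0 b0 E (map swap_gen W) Q P"
proof -
  have W: "W \<noteq> []" using assms unfolding push_inv_def by auto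
  then have "hd (map swap_gen W) = swap_gen (hd W)" by (cases W) auto
  then show ?thesis using assms W unfolding push_inv_def eval_swap by (simp add: swap_props)
qed

lemma eval_prepend:
  assumes "partial_iso d P" "partial_iso d Q" "partial_iso d Q'" "Q \<subseteq>\<^sub>m Q'"
    "eval_word W P Q c = Some x" "act P Q' g x = Some y"
  shows "eval_word (g # W) P Q' c = Some y"
  using eval_mono_map[OF assms(1,1,2,3) map_le_refl assms(4,5)] assms(6) by simp

text \<open>Prepending a t-letter g to a word W starting with the same generator (g = hd W,
  as gW is reduced): the images are pushed once more through the monotone final
  interval of q.\<close>

lemma step_same_generator:
  fixes d :: "'a::linorder \<Rightarrow> 'a \<Rightarrow> rat"
  assumes QU: "QU_prec d" and I: "push_inv d a0 b0 E W P Q" and g: "g = Gt \<or> g = Gt_inv"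
    and h: "hd W = g"
  shows "\<exists>P' Q'. P \<subseteq>\<^sub>m P' \<and> Q \<subseteq>\<^sub>m Q' \<and> dom P' \<subseteq> dom P \<union> {a0<..<b0} \<and>
                 dom Q' \<subseteq> dom Q \<union> {a0<..<b0} \<and> push_inv d a0 b0 E (g # W) P' Q'"
proof -
  note IE = push_inv_elim[OF I]
  have ns: "\<not> s_letter g" using g unfolding s_letter_def by auto
  then have bo: "base_map g P Q' = Q'" "other_map g P Q' = P" for Q'
    unfolding base_map_def other_map_def by auto
  obtain a where a: "a0 \<le> a" "a < b0" "mono_dir g Q a b0" "informative_upto a0 Q a"
     "\<forall>c\<in>E. \<exists>y. eval_word W P Q c = Some y \<and> a < y \<and> y < b0 \<and> (\<forall>v\<in>inner_points a0 b0 P. v < y)"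
    using IE(12) h bo by auto
  define X where "X = (\<lambda>c. the (eval_word W P Q c)) ` E"
  have fX: "finite X" unfolding X_def using IE(9) by simp
  have Xs: "X \<subseteq> {a<..<b0}" using a(5) unfolding X_def by force
  obtain Q' where Q': "Q \<subseteq>\<^sub>m Q'" "partial_iso d Q'" "dom Q' \<subseteq> dom Q \<union> {a<..<b0}" "mono_dir g Q' a b0"
      "\<forall>x\<in>X. \<exists>y. act P Q' g x = Some y \<and> x < y \<and> y < b0"
    using push_through[OF QU IE(2) g a(2) a(3) finite.emptyI _ _ fX Xs, of P] by auto
  have "\<forall>c\<in>E. \<exists>y. eval_word (g # W) P Q' c = Some y \<and> a < y \<and> y < b0 \<and>
                   (\<forall>v\<in>inner_points a0 b0 P. v < y)"
  proof
    fix c assume c: "c \<in> E"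
    obtain x where x: "eval_word W P Q c = Some x" "a < x" "\<forall>v\<in>inner_points a0 b0 P. v < x"
      using a(5) c by blast
    obtain y where y: "act P Q' g x = Some y" "x < y" "y < b0"
      using Q'(5) x(1) c unfolding X_def by force
    show "\<exists>y. eval_word (g # W) P Q' c = Some y \<and> a < y \<and> y < b0 \<and> (\<forall>v\<in>inner_points a0 b0 P. v < y)"
      using eval_prepend[OF IE(1,2) Q'(2,1) x(1) y(1)] x(2,3) y(2,3) by force
  qed
  moreover have "dom Q' \<inter> {..a} \<subseteq> dom Q" using Q'(3) by (fastforce simp: subset_iff)
  then have "informative_upto a0 Q' a" by (rule informative_upto_ext[OF a(4) Q'(1)])
  ultimately have "push_inv d a0 b0 E (g # W) P Q'"
    using IE h bo Q'(2,4) a(1,2) map_le_apply[OF Q'(1)] by (intro push_inv_intro[where a = a]) auto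
  moreover have "dom Q' \<subseteq> dom Q \<union> {a0<..<b0}"
  proof -
    have "{a<..<b0} \<subseteq> {a0<..<b0}" using a(1) by auto
    then show ?thesis using Q'(3) by blast
  qed
  ultimately show ?thesis using Q'(1) map_le_refl[of P] by blast
qed

lemma insert_fixed_point:
  fixes d :: "'a::linorder \<Rightarrow> 'a \<Rightarrow> rat"
  assumes QU: "QU_prec d" and pi: "partial_iso d Q" and Qa0: "Q a0 = Some a0"
    and Qb0: "Q b0 = Some b0" and ab: "a0 < b0" and iQ: "informative_upto a0 Q b0"
    and fX: "finite X" and Xp: "\<forall>x\<in>X. a0 < x \<and> (\<forall>v\<in>inner_points a0 b0 Q. v < x)"
  shows "\<exists>f. f \<notin> dom Q \<and> partial_iso d (Q(f \<mapsto> f)) \<and> a0 < f \<and> f < b0 \<and> (\<forall>x\<in>X. f < x) \<and>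
             (\<forall>z\<in>dom Q. \<not> (f < z \<and> z < b0)) \<and> informative_upto a0 (Q(f \<mapsto> f)) f"
proof -
  obtain \<alpha> where al: "a0 \<le> \<alpha>" "\<alpha> < b0" "Q \<alpha> = Some \<alpha>" "informative_upto a0 Q \<alpha>" "p_monotone Q \<alpha> b0"
    using last_interval[OF iQ ab piso_fin[OF pi]] by blast
  define A where "A = dom Q \<union> ran Q \<union> X"
  define Low where "Low = {v \<in> dom Q \<union> ran Q. v < b0}"
  have fA: "finite A" using piso_fin[OF pi] finite_ran fX unfolding A_def by auto
  have cut: "\<forall>z w. Q z = Some w \<longrightarrow> ((\<exists>t\<in>Low. z \<le> t) \<longleftrightarrow> (\<exists>t\<in>Low. w \<le> t))"
  proof (intro allI impI)
    fix z w assume zw: "Q z = Some w"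
    have "z < b0 \<longleftrightarrow> w < b0" using fixed_ends_between(4)[OF pi Qa0 Qb0 zw] .
    moreover have "\<not> (\<exists>t\<in>Low. v \<le> t)" if "b0 \<le> v" for v using that unfolding Low_def by auto
    ultimately show "(\<exists>t\<in>Low. z \<le> t) \<longleftrightarrow> (\<exists>t\<in>Low. w \<le> t)"
      unfolding Low_def using zw by (metis (mono_tags, lifting) UnCI domI mem_Collect_eq not_le order_refl ranI)
  qed
  obtain f where f: "f \<notin> A" "partial_iso d (Q(f \<mapsto> f))" "\<forall>v\<in>A. v < f \<longleftrightarrow> (\<exists>t\<in>Low. v \<le> t)"
    using new_fixed_point[OF QU pi fA _ _ _ cut] Qb0 unfolding A_def by blast
  have below: "v < f" if "v \<in> dom Q \<union> ran Q" "v < b0" for v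
    using f(3) that unfolding A_def Low_def by blast
  have fb0: "f < b0"
  proof -
    have "b0 \<in> A" using Qb0 unfolding A_def by auto
    then have "\<not> b0 < f" "f \<noteq> b0" using f(1,3) unfolding Low_def by auto
    then show ?thesis by auto
  qed
  have Xf: "f < x" if x: "x \<in> X" for x
  proof -
    have "t < x" if "t \<in> Low" for t
      using that Xp x unfolding Low_def inner_points_def by (cases "a0 < t") force+
    then have "\<not> x < f" using f(3) x unfolding A_def by (meson UnCI not_le)
    moreover have "x \<noteq> f" using f(1) x unfolding A_def by auto
    ultimately show ?thesis by auto
  qed
  have alf: "\<alpha> < f" using below[of \<alpha>] al(2,3) by blast
  have nodom: "\<forall>z\<in>dom Q. \<not> (f < z \<and> z < b0)" using below by fastforce
  have fQ: "f \<notin> dom Q" using f(1) unfolding A_def by auto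
  have QQ1: "Q \<subseteq>\<^sub>m Q(f \<mapsto> f)" using map_le_upd_new[OF fQ] .
  have "dom (Q(f \<mapsto> f)) \<inter> {..\<alpha>} \<subseteq> dom Q" using alf by auto
  then have "informative_upto a0 (Q(f \<mapsto> f)) \<alpha>" by (rule informative_upto_ext[OF al(4) QQ1])
  moreover have "p_monotone (Q(f \<mapsto> f)) \<alpha> f"
    using mono_sub[OF al(5) order.refl _ alf _ _ QQ1] fb0 al(3) alf by auto
  ultimately have "informative_upto a0 (Q(f \<mapsto> f)) f"
    using informative_upto_extend[OF _ alf] by simp
  moreover have "a0 < f" using below[of a0] Qa0 ab by blast
  ultimately show ?thesis using fQ f(2) fb0 Xf nodom by blast
qed

text \<open>Prepending a t-letter to a word starting with an s-letter: a fresh fixed point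
  f of q is inserted below the images, and the images are pushed through the empty,
  hence monotone, interval (f,b0) of q, landing above all inner points of p.\<close>

lemma step_switch_generator:
  fixes d :: "'a::linorder \<Rightarrow> 'a \<Rightarrow> rat"
  assumes QU: "QU_prec d" and I: "push_inv d a0 b0 E W P Q" and g: "g = Gt \<or> g = Gt_inv"
    and h: "s_letter (hd W)"
  shows "\<exists>P' Q'. P \<subseteq>\<^sub>m P' \<and> Q \<subseteq>\<^sub>m Q' \<and> dom P' \<subseteq> dom P \<union> {a0<..<b0} \<and>
                 dom Q' \<subseteq> dom Q \<union> {a0<..<b0} \<and> push_inv d a0 b0 E (g # W) P' Q'"
proof -
  note IE = push_inv_elim[OF I]
  have ns: "\<not> s_letter g" using g unfolding s_letter_def by auto
  then have bo: "base_map g P Q' = Q'" "other_map g P Q' = P" for Q'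
    unfolding base_map_def other_map_def by auto
  have bh: "base_map (hd W) P Q = P" "other_map (hd W) P Q = Q"
    using h unfolding base_map_def other_map_def by auto
  obtain a where a: "a0 \<le> a" "a < b0" "mono_dir (hd W) P a b0" "informative_upto a0 P a"
     "\<forall>c\<in>E. \<exists>y. eval_word W P Q c = Some y \<and> a < y \<and> y < b0 \<and> (\<forall>v\<in>inner_points a0 b0 Q. v < y)"
    using IE(12) bh by auto
  define X where "X = (\<lambda>c. the (eval_word W P Q c)) ` E"
  have fX: "finite X" unfolding X_def using IE(9) by simp
  have Xp: "\<forall>x\<in>X. a0 < x \<and> (\<forall>v\<in>inner_points a0 b0 Q. v < x)"
  proof
    fix x assume "x \<in> X"
    then obtain c where "c \<in> E" "x = the (eval_word W P Q c)" unfolding X_def by blast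
    then show "a0 < x \<and> (\<forall>v\<in>inner_points a0 b0 Q. v < x)" using a(1,5) by force
  qed
  obtain f where f: "f \<notin> dom Q" "partial_iso d (Q(f \<mapsto> f))" "a0 < f" "f < b0" "\<forall>x\<in>X. f < x"
      "\<forall>z\<in>dom Q. \<not> (f < z \<and> z < b0)" "informative_upto a0 (Q(f \<mapsto> f)) f"
    using insert_fixed_point[OF QU IE(2) IE(5,6,7) _ fX Xp] IE(11) unfolding bh by blast
  define Q1 where "Q1 = Q(f \<mapsto> f)"
  have QQ1: "Q \<subseteq>\<^sub>m Q1" unfolding Q1_def using map_le_upd_new[OF f(1)] .
  have empty: "dom Q1 \<inter> {f<..<b0} = {}" using f(6) unfolding Q1_def by auto
  have Q1fb: "Q1 f = Some f" "Q1 b0 = Some b0" unfolding Q1_def using f(4) IE(6) by auto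
  have mono1: "mono_dir g Q1 f b0"
    using empty Q1fb f(4) unfolding mono_dir_def p_increasing_def p_decreasing_def by auto
  have above: "\<forall>z w. Q1 z = Some w \<and> f < z \<and> z < b0 \<longrightarrow> (\<forall>t\<in>inner_points a0 b0 P. t < max z w)"
  proof (intro allI impI)
    fix z w assume "Q1 z = Some w \<and> f < z \<and> z < b0"
    then have "z \<in> dom Q1 \<inter> {f<..<b0}" by auto
    then show "\<forall>t\<in>inner_points a0 b0 P. t < max z w" using empty by blast
  qed
  have T: "finite (inner_points a0 b0 P)" "\<forall>t\<in>inner_points a0 b0 P. t < b0"
    using inner_points_finite[OF IE(1)] unfolding inner_points_def by auto
  have Xs: "X \<subseteq> {f<..<b0}"
  proof
    fix x assume x: "x \<in> X"
    then obtain c where "c \<in> E" "x = the (eval_word W P Q c)" unfolding X_def by blast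
    then have "x < b0" using a(5) by force
    then show "x \<in> {f<..<b0}" using f(5) x by auto
  qed
  obtain Q' where Q': "Q1 \<subseteq>\<^sub>m Q'" "partial_iso d Q'" "dom Q' \<subseteq> dom Q1 \<union> {f<..<b0}"
      "mono_dir g Q' f b0"
      "\<forall>x\<in>X. \<exists>y. act P Q' g x = Some y \<and> x < y \<and> y < b0 \<and> (\<forall>t\<in>inner_points a0 b0 P. t < y)"
    using push_through[OF QU f(2)[folded Q1_def] g f(4) mono1 T above fX Xs, of P] by blast
  have QQ': "Q \<subseteq>\<^sub>m Q'" using map_le_trans[OF QQ1 Q'(1)] .
  have "\<forall>c\<in>E. \<exists>y. eval_word (g # W) P Q' c = Some y \<and> f < y \<and> y < b0 \<and>
                   (\<forall>v\<in>inner_points a0 b0 P. v < y)"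
  proof
    fix c assume c: "c \<in> E"
    obtain x where x: "eval_word W P Q c = Some x" using a(5) c by blast
    have xX: "x \<in> X" using x c unfolding X_def by force
    obtain y where y: "act P Q' g x = Some y" "x < y" "y < b0" "\<forall>t\<in>inner_points a0 b0 P. t < y"
      using Q'(5) xX by blast
    have "f < x" using f(5) xX by blast
    then show "\<exists>y. eval_word (g # W) P Q' c = Some y \<and> f < y \<and> y < b0 \<and> (\<forall>v\<in>inner_points a0 b0 P. v < y)"
      using eval_prepend[OF IE(1,2) Q'(2) QQ' x y(1)] y(2-4) by force
  qed
  moreover have "dom Q' \<inter> {..f} \<subseteq> dom Q1" using Q'(3) by (fastforce simp: subset_iff)
  then have "informative_upto a0 Q' f" by (rule informative_upto_ext[OF f(7)[folded Q1_def] Q'(1)])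
  moreover have "informative_upto a0 P b0"
    using informative_upto_extend[OF a(4) a(2) IE(4)] a(3)
    unfolding mono_dir_def p_monotone_def by (auto split: if_splits)
  ultimately have "push_inv d a0 b0 E (g # W) P Q'"
    using IE bo Q'(2,4) f(3,4) map_le_apply[OF QQ'] by (intro push_inv_intro[where a = f]) auto
  moreover have "dom Q' \<subseteq> dom Q \<union> {a0<..<b0}"
  proof -
    have "dom Q1 \<union> {f<..<b0} \<subseteq> dom Q \<union> {a0<..<b0}" using f(3,4) unfolding Q1_def by auto
    then show ?thesis using Q'(3) by blast
  qed
  ultimately show ?thesis using QQ' map_le_refl[of P] by blast
qed

text \<open>Any letter g with gW reduced can be prepended: t-letters by the two cases above,
  s-letters by the s/t symmetry.\<close>

lemma step_t_letter:
  fixes d :: "'a::linorder \<Rightarrow> 'a \<Rightarrow> rat"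
  assumes QU: "QU_prec d" and I: "push_inv d a0 b0 E W P Q" and g: "g = Gt \<or> g = Gt_inv"
    and r: "g \<noteq> inv_gen (hd W)"
  shows "\<exists>P' Q'. P \<subseteq>\<^sub>m P' \<and> Q \<subseteq>\<^sub>m Q' \<and> dom P' \<subseteq> dom P \<union> {a0<..<b0} \<and>
                 dom Q' \<subseteq> dom Q \<union> {a0<..<b0} \<and> push_inv d a0 b0 E (g # W) P' Q'"
proof (cases "s_letter (hd W)")
  case True then show ?thesis using step_switch_generator[OF QU I g] by blast
next
  case False
  then have "hd W = g" using g r unfolding s_letter_def by (cases "hd W") auto
  then show ?thesis using step_same_generator[OF QU I g] by blast
qed

lemma step_letter:
  fixes d :: "'a::linorder \<Rightarrow> 'a \<Rightarrow> rat"
  assumes QU: "QU_prec d" and I: "push_inv d a0 b0 E W P Q" and r: "g \<noteq> inv_gen (hd W)"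
  shows "\<exists>P' Q'. P \<subseteq>\<^sub>m P' \<and> Q \<subseteq>\<^sub>m Q' \<and> dom P' \<subseteq> dom P \<union> {a0<..<b0} \<and>
                 dom Q' \<subseteq> dom Q \<union> {a0<..<b0} \<and> push_inv d a0 b0 E (g # W) P' Q'"
proof (cases "g = Gt \<or> g = Gt_inv")
  case True then show ?thesis using step_t_letter[OF QU I True r] by blast
next
  case False
  have "W \<noteq> []" using push_inv_elim(8)[OF I] .
  then have "swap_gen g \<noteq> inv_gen (hd (map swap_gen W))"
    using r by (cases W) (auto simp: inv_swap dest: arg_cong[of _ _ swap_gen])
  moreover have "swap_gen g = Gt \<or> swap_gen g = Gt_inv" using False by (cases g) auto
  ultimately obtain Q' P' where R: "Q \<subseteq>\<^sub>m Q'" "P \<subseteq>\<^sub>m P'" "dom Q' \<subseteq> dom Q \<union> {a0<..<b0}"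
    "dom P' \<subseteq> dom P \<union> {a0<..<b0}" "push_inv d a0 b0 E (map swap_gen (g # W)) Q' P'"
    using step_t_letter[OF QU push_inv_swap[OF I]] by fastforce
  then show ?thesis using push_inv_swap[OF R(5)] by (auto simp: comp_def)
qed

lemma push_inv_prepend:
  fixes d :: "'a::linorder \<Rightarrow> 'a \<Rightarrow> rat"
  assumes QU: "QU_prec d"
  shows "push_inv d a0 b0 E W P Q \<Longrightarrow> reduced (u @ W) \<Longrightarrow>
    \<exists>P' Q'. P \<subseteq>\<^sub>m P' \<and> Q \<subseteq>\<^sub>m Q' \<and> dom P' \<subseteq> dom P \<union> {a0<..<b0} \<and>
                 dom Q' \<subseteq> dom Q \<union> {a0<..<b0} \<and> push_inv d a0 b0 E (u @ W) P' Q'"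
proof (induction u)
  case Nil then show ?case by (intro exI[of _ P] exI[of _ Q]) auto
next
  case (Cons g u)
  obtain P1 Q1 where 1: "P \<subseteq>\<^sub>m P1" "Q \<subseteq>\<^sub>m Q1" "dom P1 \<subseteq> dom P \<union> {a0<..<b0}"
    "dom Q1 \<subseteq> dom Q \<union> {a0<..<b0}" "push_inv d a0 b0 E (u @ W) P1 Q1"
    using Cons.IH[OF Cons.prems(1)] reduced_ConsD(1) Cons.prems(2) by auto
  have "g \<noteq> inv_gen (hd (u @ W))"
    using reduced_ConsD(2) Cons.prems(2) push_inv_elim(8)[OF 1(5)] by auto
  then obtain P2 Q2 where 2: "P1 \<subseteq>\<^sub>m P2" "Q1 \<subseteq>\<^sub>m Q2" "dom P2 \<subseteq> dom P1 \<union> {a0<..<b0}"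
    "dom Q2 \<subseteq> dom Q1 \<union> {a0<..<b0}" "push_inv d a0 b0 E (g # (u @ W)) P2 Q2"
    using step_letter[OF QU 1(5)] by blast
  have "dom P2 \<subseteq> dom P \<union> {a0<..<b0}" "dom Q2 \<subseteq> dom Q \<union> {a0<..<b0}" using 1(3,4) 2(3,4) by blast+
  then show ?case using 2(5) map_le_trans[OF 1(1) 2(1)] map_le_trans[OF 1(2) 2(2)] by auto
qed

section \<open>Liberation on one interval and the invariant\<close>

context closed_interval begin

lemma t_letter: "starts_with_t W \<Longrightarrow> W \<noteq> [] \<and> \<not> s_letter (hd W) \<and> (positive_gen (hd W) \<longleftrightarrow> hd W = Gt)"
  unfolding starts_with_t_def s_letter_def positive_gen_def by auto

text \<open>Liberation by w on [a0,b0] yields the invariant for w (condition (iv) gives the lower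
  bound by the inner points of p, and condition (v) the monotone final interval of q).\<close>

lemma push_inv_of_liberation:
  assumes lib: "liberates_elem d (p |` {a0..b0}) (q |` {a0..b0}) (P |` {a0..b0}) (Q |` {a0..b0}) w"
    and fP: "fixes_ends P" and fQ: "fixes_ends Q" and fp: "fixes_ends p" and fq: "fixes_ends q"
  shows "push_inv d a0 b0 (Ess (p |` {a0..b0}) \<union> Ess (q |` {a0..b0})) w P Q"
proof -
  define E where "E = Ess (p |` {a0..b0}) \<union> Ess (q |` {a0..b0})"
  have Ep: "E = inner_points a0 b0 p \<union> inner_points a0 b0 q" unfolding E_def using restr_Ess fp fq by simp
  have fE: "finite E" unfolding Ep using inner_points_finite fp fq unfolding fixes_ends_def by blast
  have Es: "E \<subseteq> {a0<..<b0}" unfolding Ep inner_points_def by auto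
  have pP: "partial_iso d P" "P a0 = Some a0" "P b0 = Some b0" using fP unfolding fixes_ends_def by auto
  have pQ: "partial_iso d Q" "Q a0 = Some a0" "Q b0 = Some b0" using fQ unfolding fixes_ends_def by auto
  have sw: "starts_with_t w" using lib unfolding liberates_elem_def by blast
  note tl = t_letter[OF sw]
  have bo: "base_map (hd w) P Q = Q" "other_map (hd w) P Q = P" using tl unfolding base_map_def other_map_def by auto
  have iP: "informative_upto a0 P b0" using informative_upto_of_informative[OF fP] lib unfolding liberates_elem_def by blast
  have iQ: "informative_upto a0 Q b0" using informative_upto_of_informative[OF fQ] lib unfolding liberates_elem_def by blast
  have mq: "Max (dom (q |` {a0..b0})) = b0" using restr_MinMax[OF fq] by simp
  have v0: "\<exists>a. (\<forall>c \<in> E. a < the (eval_word w (P |` {a0..b0}) (Q |` {a0..b0}) c) \<and>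
             the (eval_word w (P |` {a0..b0}) (Q |` {a0..b0}) c) < Max (dom (q |` {a0..b0}))) \<and>
          (if hd w = Gt then p_increasing (Q |` {a0..b0}) a (Max (dom (q |` {a0..b0})))
           else p_decreasing (Q |` {a0..b0}) a (Max (dom (q |` {a0..b0}))))"
    using lib unfolding liberates_elem_def E_def by blast
  obtain a where a: "\<forall>c \<in> E. a < the (eval_word w (P |` {a0..b0}) (Q |` {a0..b0}) c) \<and>
        the (eval_word w (P |` {a0..b0}) (Q |` {a0..b0}) c) < b0"
     "if hd w = Gt then p_increasing (Q |` {a0..b0}) a b0 else p_decreasing (Q |` {a0..b0}) a b0"
    using v0[unfolded mq] by blast
  have aI: "a \<in> dom (Q |` {a0..b0})" "a < b0" using a(2)
    unfolding p_increasing_def p_decreasing_def by (auto split: if_splits)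
  have a0a: "a0 \<le> a" "a \<le> b0" using aI by auto
  have ai: "a \<in> {a0..b0}" "b0 \<in> {a0..b0}" using a0a ab by auto
  have md: "mono_dir (hd w) Q a b0"
    using a(2) restr_inc[OF ai] tl unfolding mono_dir_def by (auto split: if_splits)
  have Qa: "Q a = Some a" using a(2) ai unfolding p_increasing_def p_decreasing_def
    by (auto split: if_splits simp: restrict_map_def)
  have iQa: "informative_upto a0 Q a"
    using informative_upto_restrict[OF iQ Qa a0a(1) a0a(2)] piso_fin[OF pQ(1)] by simp
  have ev: "\<forall>c\<in>E. eval_word w (P |` {a0..b0}) (Q |` {a0..b0}) c = eval_word w P Q c"
  proof
    fix c assume "c \<in> E"
    then have "a0 < c" "c < b0" using Es by auto
    then have "c \<in> {a0..b0}" by (simp add: less_imp_le)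
    then show "eval_word w (P |` {a0..b0}) (Q |` {a0..b0}) c = eval_word w P Q c"
      using eval_restr[OF fP fQ] by blast
  qed
  have def0: "\<forall>c\<in>E. eval_word w (P |` {a0..b0}) (Q |` {a0..b0}) c \<noteq> None"
    using lib unfolding liberates_elem_def E_def by blast
  have def: "\<forall>c\<in>E. eval_word w P Q c \<noteq> None" using def0 ev by simp
  have lower: "\<forall>c\<in>E. \<forall>y. eval_word w P Q c = Some y \<longrightarrow> (\<forall>v\<in>inner_points a0 b0 P. v < y)"
  proof (intro ballI allI impI)
    fix c y v assume c: "c \<in> E" and y: "eval_word w P Q c = Some y" and v: "v \<in> inner_points a0 b0 P"
    have Ene: "E \<noteq> {}" using c by auto
    have mE: "Min E \<in> E" "Min E \<le> c" using fE Ene c by auto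
    obtain y0 where y0: "eval_word w P Q (Min E) = Some y0" using def mE(1) by auto
    have "\<forall>x \<in> Ess (P |` {a0..b0}). x < the (eval_word w (P |` {a0..b0}) (Q |` {a0..b0}) (Min E))"
      using lib Ene unfolding liberates_elem_def E_def by blast
    then have "v < y0" using v restr_Ess[OF fP] ev mE(1) y0 by auto
    also have "y0 \<le> y" using eval_order_le[OF pP(1) pQ(1) y0 y mE(2)] .
    finally show "v < y" .
  qed
  show ?thesis unfolding E_def[symmetric]
  proof (rule push_inv_intro[where a = a])
    show "\<forall>c\<in>E. \<exists>y. eval_word w P Q c = Some y \<and> a < y \<and> y < b0 \<and>
                    (\<forall>v\<in>inner_points a0 b0 (other_map (hd w) P Q). v < y)"
    proof
      fix c assume c: "c \<in> E"
      then obtain y where y: "eval_word w P Q c = Some y" using def by auto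
      then show "\<exists>y. eval_word w P Q c = Some y \<and> a < y \<and> y < b0 \<and>
                    (\<forall>v\<in>inner_points a0 b0 (other_map (hd w) P Q). v < y)"
        using a(1) ev c lower bo by (intro exI[of _ y]) auto
    qed
  qed (use pP pQ ab tl fE Es bo iP md iQa a0a aI in auto)
qed

lemma liberation_of_push_inv:
  assumes I: "push_inv d a0 b0 (Ess (p |` {a0..b0}) \<union> Ess (q |` {a0..b0})) W P Q"
    and sw: "starts_with_t W" and red: "reduced W"
    and fP: "fixes_ends P" and fQ: "fixes_ends Q" and fp: "fixes_ends p" and fq: "fixes_ends q"
    and pP: "p \<subseteq>\<^sub>m P" and qQ: "q \<subseteq>\<^sub>m Q"
  shows "liberates_elem d (p |` {a0..b0}) (q |` {a0..b0}) (P |` {a0..b0}) (Q |` {a0..b0}) W"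
proof -
  define E where "E = Ess (p |` {a0..b0}) \<union> Ess (q |` {a0..b0})"
  note IE = push_inv_elim[OF I[folded E_def]]
  note tl = t_letter[OF sw]
  have bo: "base_map (hd W) P Q = Q" "other_map (hd W) P Q = P" using tl unfolding base_map_def other_map_def by auto
  obtain a where a: "a0 \<le> a" "a < b0" "mono_dir (hd W) Q a b0" "informative_upto a0 Q a"
     "\<forall>c\<in>E. \<exists>y. eval_word W P Q c = Some y \<and> a < y \<and> y < b0 \<and> (\<forall>v\<in>inner_points a0 b0 P. v < y)"
    using IE(12) bo by auto
  have Es: "E \<subseteq> {a0..b0}"
  proof
    fix x assume "x \<in> E"
    then have "a0 < x" "x < b0" using IE(10) by auto
    then show "x \<in> {a0..b0}" by (simp add: less_imp_le)
  qed
  have ev: "\<forall>c\<in>E. eval_word W (P |` {a0..b0}) (Q |` {a0..b0}) c = eval_word W P Q c"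
  proof
    fix c assume "c \<in> E"
    then have "c \<in> {a0..b0}" using Es by auto
    then show "eval_word W (P |` {a0..b0}) (Q |` {a0..b0}) c = eval_word W P Q c"
      using eval_restr[OF fP fQ] by blast
  qed
  have pQ: "partial_iso d Q" "Q a0 = Some a0" "Q b0 = Some b0" using fQ unfolding fixes_ends_def by auto
  have ai: "a \<in> {a0..b0}" "b0 \<in> {a0..b0}" using a(1,2) ab by auto
  have Qa: "Q a = Some a" using a(3) unfolding mono_dir_def p_increasing_def p_decreasing_def
    by (auto split: if_splits)
  have pm: "p_monotone Q a b0" using a(3) unfolding mono_dir_def p_monotone_def by (auto split: if_splits)
  have iQ: "informative_upto a0 Q b0" using informative_upto_extend[OF a(4) a(2) pQ(3) pm] .
  have iP: "informative_upto a0 P b0" using IE(11) bo by simp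
  have v: "if hd W = Gt then p_increasing (Q |` {a0..b0}) a b0 else p_decreasing (Q |` {a0..b0}) a b0"
    using a(3) restr_inc[OF ai] tl unfolding mono_dir_def by (auto split: if_splits)
  have mm: "Min (dom (P |` {a0..b0})) = a0" "Max (dom (P |` {a0..b0})) = b0"
     "Min (dom (Q |` {a0..b0})) = a0" "Max (dom (Q |` {a0..b0})) = b0"
     "Min (dom (p |` {a0..b0})) = a0" "Max (dom (p |` {a0..b0})) = b0"
     "Min (dom (q |` {a0..b0})) = a0" "Max (dom (q |` {a0..b0})) = b0"
    using restr_MinMax fP fQ fp fq by auto
  have defd: "\<forall>c \<in> E. eval_word W (P |` {a0..b0}) (Q |` {a0..b0}) c \<noteq> None" using a(5) ev by fastforce
  have iv: "E \<noteq> {} \<longrightarrow> (\<forall>x \<in> Ess (P |` {a0..b0}). x < the (eval_word W (P |` {a0..b0}) (Q |` {a0..b0}) (Min E)))"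
  proof
    assume "E \<noteq> {}"
    then have "Min E \<in> E" using IE(9) by auto
    then obtain y where y: "eval_word W P Q (Min E) = Some y" "\<forall>v\<in>inner_points a0 b0 P. v < y" using a(5) by blast
    then show "\<forall>x \<in> Ess (P |` {a0..b0}). x < the (eval_word W (P |` {a0..b0}) (Q |` {a0..b0}) (Min E))"
      using ev \<open>Min E \<in> E\<close> restr_Ess[OF fP] by auto
  qed
  have vv: "\<exists>a. (\<forall>c \<in> E. a < the (eval_word W (P |` {a0..b0}) (Q |` {a0..b0}) c) \<and>
             the (eval_word W (P |` {a0..b0}) (Q |` {a0..b0}) c) < b0) \<and>
          (if hd W = Gt then p_increasing (Q |` {a0..b0}) a b0 else p_decreasing (Q |` {a0..b0}) a b0)"
    using a(5) ev v by (intro exI[of _ a] conjI) fastforce+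
  have pis: "partial_iso d (P |` {a0..b0})" "partial_iso d (Q |` {a0..b0})"
    using piso_restrict fP fQ unfolding fixes_ends_def by blast+
  have le: "p |` {a0..b0} \<subseteq>\<^sub>m P |` {a0..b0}" "q |` {a0..b0} \<subseteq>\<^sub>m Q |` {a0..b0}"
    using restrict_map_le pP qQ by blast+
  have inf: "informative (P |` {a0..b0})" "informative (Q |` {a0..b0})"
    using informative_of_informative_upto fP fQ iP iQ by blast+
  show ?thesis
    unfolding liberates_elem_def E_def[symmetric] mm(1-4,6,8)
    using pis le red inf sw defd iv vv mm(5,7) by simp
qed

end

lemma per_interval:
  fixes d :: "'a::linorder \<Rightarrow> 'a \<Rightarrow> rat"
  assumes QU: "QU_prec d" and ab: "a < b"
    and fa: "p a = Some a" "q a = Some a" and fb: "p b = Some b" "q b = Some b"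
    and pP: "p \<subseteq>\<^sub>m P" and qQ: "q \<subseteq>\<^sub>m Q"
    and piP: "partial_iso d P" and piQ: "partial_iso d Q" and pip: "partial_iso d p" and piq: "partial_iso d q"
    and lib: "liberates_elem d (p |` {a..b}) (q |` {a..b}) (P |` {a..b}) (Q |` {a..b}) w"
    and red: "reduced (u @ w)" and sw: "starts_with_t (u @ w)"
  shows "\<exists>P' Q'. P \<subseteq>\<^sub>m P' \<and> Q \<subseteq>\<^sub>m Q' \<and> partial_iso d P' \<and> partial_iso d Q' \<and>
     dom P' \<subseteq> dom P \<union> {a<..<b} \<and> dom Q' \<subseteq> dom Q \<union> {a<..<b} \<and>
     liberates_elem d (p |` {a..b}) (q |` {a..b}) (P' |` {a..b}) (Q' |` {a..b}) (u @ w)"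
proof -
  interpret closed_interval d a b using ab by unfold_locales
  have fixes_ends: "fixes_ends P" "fixes_ends Q" "fixes_ends p" "fixes_ends q"
    unfolding fixes_ends_def using fa fb piP piQ pip piq map_le_apply[OF pP] map_le_apply[OF qQ] by auto
  have I: "push_inv d a b (Ess (p |` {a..b}) \<union> Ess (q |` {a..b})) w P Q"
    using push_inv_of_liberation[OF lib fixes_ends] .
  obtain P' Q' where R: "P \<subseteq>\<^sub>m P'" "Q \<subseteq>\<^sub>m Q'" "dom P' \<subseteq> dom P \<union> {a<..<b}"
    "dom Q' \<subseteq> dom Q \<union> {a<..<b}" "push_inv d a b (Ess (p |` {a..b}) \<union> Ess (q |` {a..b})) (u @ w) P' Q'"
    using push_inv_prepend[OF QU I red] by blast
  have pi': "partial_iso d P'" "partial_iso d Q'" using push_inv_elim(1,2)[OF R(5)] by auto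
  have fixes_ends': "fixes_ends P'" "fixes_ends Q'"
    unfolding fixes_ends_def using pi' push_inv_elim(3-6)[OF R(5)] by auto
  have le: "p \<subseteq>\<^sub>m P'" "q \<subseteq>\<^sub>m Q'" using map_le_trans pP qQ R(1,2) by blast+
  have "liberates_elem d (p |` {a..b}) (q |` {a..b}) (P' |` {a..b}) (Q' |` {a..b}) (u @ w)"
    using liberation_of_push_inv[OF R(5) sw red fixes_ends' fixes_ends(3,4) le] .
  then show ?thesis using R pi' by blast
qed

section \<open>Gluing the intervals\<close>

definition consecutive :: "'a::linorder set \<Rightarrow> ('a \<times> 'a) set" where
  "consecutive Fx = {(a,b). a \<in> Fx \<and> b \<in> Fx \<and> a < b \<and> (\<forall>c\<in>Fx. \<not> (a < c \<and> c < b))}"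

lemma consecutive_unique:
  fixes a :: "'a::linorder"
  assumes "(a,b) \<in> consecutive Fx" "(a',b') \<in> consecutive Fx" "a \<le> x" "x \<le> b" "a' < x" "x < b'"
  shows "a = a' \<and> b = b'"
proof -
  have c: "a \<in> Fx" "b \<in> Fx" "a < b" "\<forall>c\<in>Fx. \<not> (a < c \<and> c < b)"
    "a' \<in> Fx" "b' \<in> Fx" "a' < b'" "\<forall>c\<in>Fx. \<not> (a' < c \<and> c < b')"
    using assms(1,2) unfolding consecutive_def by auto
  have eqa: "a = a'"
  proof (rule ccontr)
    assume "a \<noteq> a'"
    then consider "a' < a" | "a < a'" by fastforce
    then show False
    proof cases
      case 1 then show False using c(1,8) assms(3,6) by force
    next
      case 2 then show False using c(4,5) assms(4,5) by force
    qed
  qed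
  have 2: "b = b'"
  proof (rule ccontr)
    assume "b \<noteq> b'"
    then consider "b < b'" | "b' < b" by fastforce
    then show False
    proof cases
      case 1 then show False using c(2,3,8) eqa by force
    next
      case 2 then show False using c(4,6,7) eqa by force
    qed
  qed
  show ?thesis using eqa 2 by simp
qed

lemma restrict_eq_of_map_le:
  assumes "p' \<subseteq>\<^sub>m P" "dom P \<inter> S \<subseteq> dom p'"
  shows "P |` S = p' |` S"
proof
  fix x show "(P |` S) x = (p' |` S) x"
    using assms map_le_apply[OF assms(1)] by (cases "x \<in> S"; cases "p' x") (auto simp: restrict_map_def)
qed

lemma subset_outside: "A \<subseteq> B \<union> U \<Longrightarrow> (\<And>x. x \<in> U \<Longrightarrow> x \<notin> S) \<Longrightarrow> A \<inter> S \<subseteq> B"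
  by blast

lemma extend_on_intervals:
  fixes p' q' :: "'a::linorder \<rightharpoonup> 'a"
  assumes fK: "finite K" and K: "K \<subseteq> consecutive Fx"
    and pi: "partial_iso d p'" "partial_iso d q'"
    and step: "\<And>a b P Q. (a,b) \<in> K \<Longrightarrow> partial_iso d P \<Longrightarrow> partial_iso d Q \<Longrightarrow>
        p' \<subseteq>\<^sub>m P \<Longrightarrow> q' \<subseteq>\<^sub>m Q \<Longrightarrow> P |` {a..b} = p' |` {a..b} \<Longrightarrow> Q |` {a..b} = q' |` {a..b} \<Longrightarrow>
        \<exists>P2 Q2. P \<subseteq>\<^sub>m P2 \<and> Q \<subseteq>\<^sub>m Q2 \<and> partial_iso d P2 \<and> partial_iso d Q2 \<and>
          dom P2 \<subseteq> dom P \<union> {a<..<b} \<and> dom Q2 \<subseteq> dom Q \<union> {a<..<b} \<and>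
          G a b (P2 |` {a..b}) (Q2 |` {a..b})"
  shows "\<exists>P Q. partial_iso d P \<and> partial_iso d Q \<and> p' \<subseteq>\<^sub>m P \<and> q' \<subseteq>\<^sub>m Q \<and>
     dom P \<subseteq> dom p' \<union> (\<Union>(a,b)\<in>K. {a<..<b}) \<and> dom Q \<subseteq> dom q' \<union> (\<Union>(a,b)\<in>K. {a<..<b}) \<and>
     (\<forall>(a,b)\<in>K. G a b (P |` {a..b}) (Q |` {a..b}))"
proof -
  have separate: "\<not> (a \<le> x \<and> x \<le> b)"
    if "(a,b) \<in> K" "(a',b') \<in> K" "(a,b) \<noteq> (a',b')" "a' < x" "x < b'" for a b a' b' x
  proof
    assume "a \<le> x \<and> x \<le> b"
    then have "a = a' \<and> b = b'" using consecutive_unique[of a b Fx a' b' x] that K by blast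
    then show False using that(3) by simp
  qed
  have "\<exists>P Q. partial_iso d P \<and> partial_iso d Q \<and> p' \<subseteq>\<^sub>m P \<and> q' \<subseteq>\<^sub>m Q \<and>
     dom P \<subseteq> dom p' \<union> (\<Union>(a,b)\<in>K'. {a<..<b}) \<and> dom Q \<subseteq> dom q' \<union> (\<Union>(a,b)\<in>K'. {a<..<b}) \<and>
     (\<forall>(a,b)\<in>K'. G a b (P |` {a..b}) (Q |` {a..b}))" if "finite K'" "K' \<subseteq> K" for K'
    using that
  proof (induction K' rule: finite_induct)
    case empty
    show ?case using pi by (intro exI[of _ p'] exI[of _ q']) auto
  next
    case (insert ab K')
    obtain a b where ab: "ab = (a,b)" by fastforce
    have abK: "(a,b) \<in> K" and K'K: "K' \<subseteq> K" and new: "(a,b) \<notin> K'"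
      using insert.prems insert.hyps(2) ab by auto
    obtain P Q where PQ: "partial_iso d P" "partial_iso d Q" "p' \<subseteq>\<^sub>m P" "q' \<subseteq>\<^sub>m Q"
        "dom P \<subseteq> dom p' \<union> (\<Union>(a,b)\<in>K'. {a<..<b})" "dom Q \<subseteq> dom q' \<union> (\<Union>(a,b)\<in>K'. {a<..<b})"
        "\<forall>(a,b)\<in>K'. G a b (P |` {a..b}) (Q |` {a..b})"
      using insert.IH K'K by blast
    have "x \<notin> {a..b}" if x: "x \<in> (\<Union>(a,b)\<in>K'. {a<..<b})" for x
    proof -
      obtain a' b' where "(a',b') \<in> K'" "a' < x" "x < b'" using x by auto
      then show ?thesis using separate[OF abK, of a' b' x] K'K new by auto
    qed
    then have "P |` {a..b} = p' |` {a..b}" "Q |` {a..b} = q' |` {a..b}"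
      using restrict_eq_of_map_le[OF PQ(3) subset_outside[OF PQ(5)]]
        restrict_eq_of_map_le[OF PQ(4) subset_outside[OF PQ(6)]] by blast+
    then obtain P2 Q2 where R: "P \<subseteq>\<^sub>m P2" "Q \<subseteq>\<^sub>m Q2" "partial_iso d P2" "partial_iso d Q2"
        "dom P2 \<subseteq> dom P \<union> {a<..<b}" "dom Q2 \<subseteq> dom Q \<union> {a<..<b}" "G a b (P2 |` {a..b}) (Q2 |` {a..b})"
      using step[OF abK PQ(1-4)] by blast
    have "P2 |` {a'..b'} = P |` {a'..b'} \<and> Q2 |` {a'..b'} = Q |` {a'..b'}" if a'b': "(a',b') \<in> K'" for a' b'
    proof -
      have "x \<notin> {a'..b'}" if "x \<in> {a<..<b}" for x
        using separate[of a' b' a b x] a'b' K'K abK new that by auto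
      then show ?thesis
        using restrict_eq_of_map_le[OF R(1) subset_outside[OF R(5)]]
          restrict_eq_of_map_le[OF R(2) subset_outside[OF R(6)]] by blast
    qed
    then have "\<forall>(a,b)\<in>insert ab K'. G a b (P2 |` {a..b}) (Q2 |` {a..b})"
      using PQ(7) R(7) ab by auto
    moreover have "dom P2 \<subseteq> dom p' \<union> (\<Union>(a,b)\<in>insert ab K'. {a<..<b})"
      "dom Q2 \<subseteq> dom q' \<union> (\<Union>(a,b)\<in>insert ab K'. {a<..<b})"
    proof -
      define U where "U = (\<Union>(a,b)\<in>K'. {a<..<b})"
      have eq: "(\<Union>(a,b)\<in>insert ab K'. {a<..<b}) = {a<..<b} \<union> U" unfolding U_def using ab by auto
      show "dom P2 \<subseteq> dom p' \<union> (\<Union>(a,b)\<in>insert ab K'. {a<..<b})"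
        "dom Q2 \<subseteq> dom q' \<union> (\<Union>(a,b)\<in>insert ab K'. {a<..<b})"
        unfolding eq using PQ(5,6)[folded U_def] R(5,6) by blast+
    qed
    ultimately show ?case
      using R(3,4) map_le_trans[OF PQ(3) R(1)] map_le_trans[OF PQ(4) R(2)] by blast
  qed
  then show ?thesis using fK by blast
qed

lemma dom_between:
  fixes A B U :: "'a::linorder set"
  assumes "finite B" "A \<subseteq> B" "B \<subseteq> A \<union> U" "\<forall>x\<in>U. \<exists>a\<in>A. \<exists>b\<in>A. a < x \<and> x < b"
  shows "Min B = Min A \<and> Max B = Max A"
proof (cases "A = {}")
  case True
  then have "U = {}" using assms(4) by auto
  then have "B = {}" using assms(3) True by auto
  then show ?thesis using True by simp
next
  case False
  have fA: "finite A" using assms(1,2) finite_subset by blast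
  have Bne: "B \<noteq> {}" using False assms(2) by auto
  have "Min B = Min A"
  proof (rule antisym)
    show "Min B \<le> Min A" using assms(1,2) False Bne by (meson Min_antimono)
    have "Min B \<in> B" using assms(1) Bne by simp
    then have "Min B \<in> A \<or> Min B \<in> U" using assms(3) by auto
    then show "Min A \<le> Min B"
    proof
      assume "Min B \<in> A" then show ?thesis using fA by simp
    next
      assume "Min B \<in> U"
      then obtain a where "a \<in> A" "a < Min B" using assms(4) by blast
      then have "a \<in> B" using assms(2) by auto
      then have "Min B \<le> a" using assms(1) by simp
      then show ?thesis using \<open>a < Min B\<close> by simp
    qed
  qed
  moreover have "Max B = Max A"
  proof (rule antisym)
    show "Max A \<le> Max B" using assms(1,2) False by (meson Max_mono)
    have "Max B \<in> B" using assms(1) Bne by simp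
    then have "Max B \<in> A \<or> Max B \<in> U" using assms(3) by auto
    then show "Max B \<le> Max A"
    proof
      assume "Max B \<in> A" then show ?thesis using fA by simp
    next
      assume "Max B \<in> U"
      then obtain b where "b \<in> A" "Max B < b" using assms(4) by blast
      then have "b \<in> B" using assms(2) by auto
      then have "b \<le> Max B" using assms(1) by simp
      then show ?thesis using \<open>Max B < b\<close> by simp
    qed
  qed
  ultimately show ?thesis by simp
qed

lemma extend_liberation_p:
  fixes d :: "'a::linorder \<Rightarrow> 'a \<Rightarrow> rat"
  assumes QU: "QU_prec d" and pip: "partial_iso d p" and piq: "partial_iso d q"
    and lib: "liberates_p d p q p' q' w" and red: "reduced (u @ w)" and uu: "u = [] \<or> starts_with_t u"
  shows "\<exists>p'' q''. partial_iso d p'' \<and> partial_iso d q'' \<and> p' \<subseteq>\<^sub>m p'' \<and> q' \<subseteq>\<^sub>m q'' \<and>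
                  liberates_p d p q p'' q'' (u @ w)"
proof (cases "u = []")
  case True
  have "partial_iso d p'" "partial_iso d q'" using lib unfolding liberates_p_def by auto
  then show ?thesis using lib True by (intro exI[of _ p'] exI[of _ q']) auto
next
  case False
  then have sw: "starts_with_t (u @ w)" using uu unfolding starts_with_t_def by (cases u) auto
  have L: "partial_iso d p'" "partial_iso d q'" "p \<subseteq>\<^sub>m p'" "q \<subseteq>\<^sub>m q'"
    "Min (dom p') = Min (dom p)" "Min (dom q') = Min (dom q)"
    "Max (dom p') = Max (dom p)" "Max (dom q') = Max (dom q)"
    using lib unfolding liberates_p_def by blast+
  define Fx where "Fx = Fix p \<inter> Fix q"
  define C where "C = consecutive Fx"
  have libw: "liberates_elem d (p |` {a..b}) (q |` {a..b}) (p' |` {a..b}) (q' |` {a..b}) w"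
    if "(a,b) \<in> C" for a b
    using lib that unfolding liberates_p_def C_def consecutive_def Fx_def by blast
  have FxD: "p x = Some x" "q x = Some x" if "x \<in> Fx" for x
    using that unfolding Fx_def Fix_def by auto
  have Fxdom: "Fx \<subseteq> dom p'" "Fx \<subseteq> dom q'"
    using FxD map_le_apply[OF L(3)] map_le_apply[OF L(4)] by blast+
  have fC: "finite C"
    using finite_subset[OF Fxdom(1) piso_fin[OF L(1)]]
    unfolding C_def consecutive_def by (auto intro: finite_subset[of _ "Fx \<times> Fx"])
  have "\<exists>P2 Q2. P \<subseteq>\<^sub>m P2 \<and> Q \<subseteq>\<^sub>m Q2 \<and> partial_iso d P2 \<and> partial_iso d Q2 \<and>
          dom P2 \<subseteq> dom P \<union> {a<..<b} \<and> dom Q2 \<subseteq> dom Q \<union> {a<..<b} \<and>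
          liberates_elem d (p |` {a..b}) (q |` {a..b}) (P2 |` {a..b}) (Q2 |` {a..b}) (u @ w)"
    if "(a,b) \<in> C" "partial_iso d P" "partial_iso d Q" "p' \<subseteq>\<^sub>m P" "q' \<subseteq>\<^sub>m Q"
      "P |` {a..b} = p' |` {a..b}" "Q |` {a..b} = q' |` {a..b}" for a b P Q
  proof -
    have ab: "a \<in> Fx" "b \<in> Fx" "a < b" using that(1) unfolding C_def consecutive_def by auto
    show ?thesis
      using per_interval[OF QU ab(3) FxD[OF ab(1)] FxD[OF ab(2)] _ _ that(2,3) pip piq _ red sw]
        map_le_trans[OF L(3) that(4)] map_le_trans[OF L(4) that(5)] libw[OF that(1)] that(6,7)
      by auto
  qed
  then obtain P Q where PQ: "partial_iso d P" "partial_iso d Q" "p' \<subseteq>\<^sub>m P" "q' \<subseteq>\<^sub>m Q"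
      "dom P \<subseteq> dom p' \<union> (\<Union>(a,b)\<in>C. {a<..<b})" "dom Q \<subseteq> dom q' \<union> (\<Union>(a,b)\<in>C. {a<..<b})"
      "\<forall>(a,b)\<in>C. liberates_elem d (p |` {a..b}) (q |` {a..b}) (P |` {a..b}) (Q |` {a..b}) (u @ w)"
    using extend_on_intervals[OF fC _ L(1,2), of Fx
        "\<lambda>a b P Q. liberates_elem d (p |` {a..b}) (q |` {a..b}) P Q (u @ w)"]
    unfolding C_def by blast
  have inside: "\<forall>x\<in>(\<Union>(a,b)\<in>C. {a<..<b}). \<exists>a\<in>dom m. \<exists>b\<in>dom m. a < x \<and> x < b"
    if Fm: "Fx \<subseteq> dom m" for m :: "'a \<rightharpoonup> 'a"
  proof
    fix x assume "x \<in> (\<Union>(a,b)\<in>C. {a<..<b})"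
    then obtain a b where "(a,b) \<in> C" "a < x" "x < b" by auto
    then show "\<exists>a\<in>dom m. \<exists>b\<in>dom m. a < x \<and> x < b" using Fm unfolding C_def consecutive_def by blast
  qed
  have "Min (dom P) = Min (dom p') \<and> Max (dom P) = Max (dom p')"
    using dom_between[OF piso_fin[OF PQ(1)] map_le_implies_dom_le[OF PQ(3)] PQ(5) inside[OF Fxdom(1)]] .
  moreover have "Min (dom Q) = Min (dom q') \<and> Max (dom Q) = Max (dom q')"
    using dom_between[OF piso_fin[OF PQ(2)] map_le_implies_dom_le[OF PQ(4)] PQ(6) inside[OF Fxdom(2)]] .
  ultimately have "liberates_p d p q P Q (u @ w)"
    using PQ L red map_le_trans[OF L(3) PQ(3)] map_le_trans[OF L(4) PQ(4)]
    unfolding liberates_p_def C_def consecutive_def Fx_def by auto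
  then show ?thesis using PQ by blast
qed

theorem lemma5p3:
  fixes d :: "'a::linorder \<Rightarrow> 'a \<Rightarrow> rat"
    and p q p' q' :: "'a \<rightharpoonup> 'a"
    and w u :: "gen list"
  assumes "QU_prec d"
    and "pw_elementary d p q"
    and "reduced u"
    and "reduced (u @ w)"
  shows "(liberates_p d p q p' q' w \<and> (u = [] \<or> starts_with_t u) \<longrightarrow>
            (\<exists>p'' q''. partial_iso d p'' \<and> partial_iso d q'' \<and> p' \<subseteq>\<^sub>m p'' \<and> q' \<subseteq>\<^sub>m q'' \<and>
                       liberates_p d p q p'' q'' (u @ w)))
       \<and> (liberates_q d p q p' q' w \<and> (u = [] \<or> starts_with_s u) \<longrightarrow>
            (\<exists>p'' q''. partial_iso d p'' \<and> partial_iso d q'' \<and> p' \<subseteq>\<^sub>m p'' \<and> q' \<subseteq>\<^sub>m q'' \<and>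
                       liberates_q d p q p'' q'' (u @ w)))"
proof (intro conjI impI)
  have pi: "partial_iso d p" "partial_iso d q"
    using assms(2) unfolding pw_elementary_def by auto
  show "\<exists>p'' q''. partial_iso d p'' \<and> partial_iso d q'' \<and> p' \<subseteq>\<^sub>m p'' \<and> q' \<subseteq>\<^sub>m q'' \<and>
                       liberates_p d p q p'' q'' (u @ w)"
    if "liberates_p d p q p' q' w \<and> (u = [] \<or> starts_with_t u)"
    using extend_liberation_p[OF assms(1) pi _ assms(4)] that by blast
  text \<open>The q-version is the p-version for the pair (q,p) and the swapped words.\<close>
  show "\<exists>p'' q''. partial_iso d p'' \<and> partial_iso d q'' \<and> p' \<subseteq>\<^sub>m p'' \<and> q' \<subseteq>\<^sub>m q'' \<and>
                       liberates_q d p q p'' q'' (u @ w)"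
    if h: "liberates_q d p q p' q' w \<and> (u = [] \<or> starts_with_s u)"
  proof -
    have "reduced (map swap_gen u @ map swap_gen w)"
      using assms(4) reduced_swap[of "u @ w"] by simp
    moreover have "map swap_gen u = [] \<or> starts_with_t (map swap_gen u)"
      using h unfolding starts_with_s_def starts_with_t_def by (cases u) auto
    ultimately obtain q'' p'' where "partial_iso d q''" "partial_iso d p''" "q' \<subseteq>\<^sub>m q''" "p' \<subseteq>\<^sub>m p''"
      "liberates_p d q p q'' p'' (map swap_gen u @ map swap_gen w)"
      using extend_liberation_p[OF assms(1) pi(2,1)] h unfolding liberates_q_def by blast
    then show ?thesis unfolding liberates_q_def by auto
  qed
qed

end
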